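(* Let $\nu$ be a group which has a perfect normal subgroup $\kappa$ with $\nu/\kappa$ solvable. If $\nu=G*H$ is a free product, then either $G$ or $H$ is perfect, or $\nu/\kappa$ is isomorphic to the infinite dihedral group $D_\infty=\mathbb{Z}\rtimes_{-1}\mathbb{Z}/2$. *)

theory Defs
  imports "HOL-Algebra.Algebra"
begin

definition perfect_subgroup :: "('a, 'b) monoid_scheme \<Rightarrow> 'a set \<Rightarrow> bool" where
  "perfect_subgroup N S \<longleftrightarrow> subgroup S N \<and> derived N S = S"

definition alternating_word :: "('a, 'b) monoid_scheme \<Rightarrow> 'a set \<Rightarrow> 'a set \<Rightarrow> 'a list \<Rightarrow> bool" where
  "alternating_word N G H xs \<longleftrightarrow>
     xs \<noteq> [] \<and> set xs \<subseteq> (G \<union> H) - {\<one>\<^bsub>N\<^esub>} \<and>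
     (\<forall>i. Suc i < length xs \<longrightarrow>
        \<not> (xs ! i \<in> G \<and> xs ! Suc i \<in> G) \<and> \<not> (xs ! i \<in> H \<and> xs ! Suc i \<in> H))"

definition free_product :: "('a, 'b) monoid_scheme \<Rightarrow> 'a set \<Rightarrow> 'a set \<Rightarrow> bool" where
  "free_product N G H \<longleftrightarrow>
     subgroup G N \<and> subgroup H N \<and> G \<inter> H = {\<one>\<^bsub>N\<^esub>} \<and>
     generate N (G \<union> H) = carrier N \<and>
     (\<forall>xs. alternating_word N G H xs \<longrightarrow> foldr (\<otimes>\<^bsub>N\<^esub>) xs \<one>\<^bsub>N\<^esub> \<noteq> \<one>\<^bsub>N\<^esub>)"

text \<open>The infinite dihedral group Z \<rtimes>_{-1} Z/2: elements (a, s) with a \<in> Z and s \<in> Z/2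
  (s = True meaning the nontrivial element), product (a,s)(b,t) = (a + (-1)^s b, s + t).\<close>
definition Dinf :: "(int \<times> bool) monoid" where
  "Dinf = \<lparr> carrier = UNIV,
            monoid.mult = (\<lambda>x y. (fst x + (if snd x then - fst y else fst y), snd x \<noteq> snd y)),
            one = (0, False) \<rparr>"

end

theory Submission
  imports Defs
begin

text \<open>
  Let Q = N/K and p: N \<rightarrow> Q the projection. First, Q is the free product of p(G) and p(H):
  these generate Q, and no alternating word in them is trivial. For the latter, extend
  g \<mapsto> (0, p g) and h \<mapsto> (\<delta>(p h) - \<delta>(1), p h) to a homomorphism from N into the
  semidirect product \<int>[Q] \<rtimes> Q (a Fox derivative). It kills the perfect group K, whose image
  lies in the abelian subgroup \<int>[Q]. But in a shortest alternating relation of Q the partial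
  products are pairwise distinct, so the image of a lift of the relation has coefficient \<plusminus>1
  at the first partial product.

  If p(G) is trivial, then G \<subseteq> K and the retraction of N onto G maps K onto G, so G is
  perfect; similarly for H. Otherwise Q is a solvable free product of two nontrivial groups. If
  one factor had three elements 1, a, a' and b \<noteq> 1 lay in the other, then a b a b\<inverse> and
  a' b a' b\<inverse> would play ping-pong on normal forms and generate a free group of rank two,
  which maps onto the perfect subgroup of the symmetric group on five points generated by two
  5-cycles. Hence both factors have order two, and Q is infinite dihedral.
\<close>

lemma (in monoid) foldr_mult_closed: "set w \<subseteq> carrier G \<Longrightarrow> foldr (\<otimes>) w \<one> \<in> carrier G"
  by (induction w) auto

section \<open>Normal forms in free products\<close>

locale free_prod = group N for N (structure) +
  fixes G H assumes free_product: "free_product N G H"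
begin

lemma subgroup_G: "subgroup G N" and subgroup_H: "subgroup H N" and G_inter_H: "G \<inter> H = {\<one>}"
  and generate_G_H: "generate N (G \<union> H) = carrier N"
  and alternating_word_prod: "alternating_word N G H xs \<Longrightarrow> foldr (\<otimes>) xs \<one> \<noteq> \<one>"
  using free_product unfolding free_product_def by auto

lemma G_carrier: "G \<subseteq> carrier N" and H_carrier: "H \<subseteq> carrier N"
  using subgroup_G subgroup_H subgroup.subset by auto

lemma factor_inv_closed: "c \<in> G \<union> H \<Longrightarrow> inv c \<in> G \<union> H"
  using subgroup.m_inv_closed[OF subgroup_G] subgroup.m_inv_closed[OF subgroup_H] by blast

definition same_factor :: "'a \<Rightarrow> 'a \<Rightarrow> bool" where
  "same_factor c d \<longleftrightarrow> (c \<in> G \<and> d \<in> G) \<or> (c \<in> H \<and> d \<in> H)"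

definition letters :: "'a set" where
  "letters = (G \<union> H) - {\<one>}"

definition reduced :: "'a list \<Rightarrow> bool" where
  "reduced w \<longleftrightarrow> set w \<subseteq> letters \<and> successively (\<lambda>c d. \<not> same_factor c d) w"

abbreviation word_prod :: "'a list \<Rightarrow> 'a" where
  "word_prod w \<equiv> foldr (\<otimes>) w \<one>"

lemma alternating_word_iff_reduced: "alternating_word N G H w \<longleftrightarrow> w \<noteq> [] \<and> reduced w"
  unfolding alternating_word_def reduced_def letters_def successively_conv_nth same_factor_def
  by blast

lemma reduced_word_prod_neq_one: "reduced w \<Longrightarrow> w \<noteq> [] \<Longrightarrow> word_prod w \<noteq> \<one>"
  using alternating_word_prod alternating_word_iff_reduced by blast

lemma letters_carrier: "c \<in> letters \<Longrightarrow> c \<in> carrier N"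
  using G_carrier H_carrier unfolding letters_def by auto

lemma letter_in_one_factor: "c \<in> letters \<Longrightarrow> (c \<in> G \<and> c \<notin> H) \<or> (c \<in> H \<and> c \<notin> G)"
  using G_inter_H unfolding letters_def by auto

lemma same_factor_sym: "same_factor c d \<longleftrightarrow> same_factor d c"
  unfolding same_factor_def by auto

lemma same_factor_refl: "c \<in> letters \<Longrightarrow> same_factor c c"
  unfolding same_factor_def letters_def by auto

lemma same_factor_trans:
  "c \<in> letters \<Longrightarrow> d \<in> letters \<Longrightarrow> e \<in> letters \<Longrightarrow> same_factor c d \<Longrightarrow> same_factor d e \<Longrightarrow> same_factor c e"
  using letter_in_one_factor[of c] letter_in_one_factor[of d] unfolding same_factor_def by blast

lemma same_factor_inv: "c \<in> carrier N \<Longrightarrow> same_factor (inv c) d \<longleftrightarrow> same_factor c d"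
  unfolding same_factor_def
  by (metis inv_inv subgroup.m_inv_closed subgroup_G subgroup_H)

lemma same_factor_iff: "c \<in> letters \<Longrightarrow> d \<in> letters \<Longrightarrow> same_factor c d \<longleftrightarrow> (c \<in> G \<longleftrightarrow> d \<in> G)"
  using letter_in_one_factor[of c] letter_in_one_factor[of d] unfolding same_factor_def by blast

lemma inv_in_G_iff: "c \<in> carrier N \<Longrightarrow> inv c \<in> G \<longleftrightarrow> c \<in> G"
  by (metis inv_inv subgroup.m_inv_closed subgroup_G)

lemma inv_letter: "c \<in> letters \<Longrightarrow> inv c \<in> letters"
  using factor_inv_closed letters_carrier unfolding letters_def by (metis DiffD1 DiffI inv_eq_1_iff singletonD)

lemma same_factor_mult:
  assumes "c \<in> letters" "d \<in> letters" "same_factor c d" "c \<otimes> d \<noteq> \<one>"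
  shows "c \<otimes> d \<in> letters" "same_factor (c \<otimes> d) d"
  using assms subgroup.m_closed[OF subgroup_G] subgroup.m_closed[OF subgroup_H]
  unfolding same_factor_def letters_def by blast+

lemma reduced_Nil [simp]: "reduced []"
  by (simp add: reduced_def)

lemma reduced_Cons: "reduced (c # w) \<longleftrightarrow> c \<in> letters \<and> reduced w \<and> (w = [] \<or> \<not> same_factor c (hd w))"
  unfolding reduced_def by (auto simp: successively_Cons)

lemma reduced_append:
  "reduced u \<Longrightarrow> reduced v \<Longrightarrow> u = [] \<or> v = [] \<or> \<not> same_factor (last u) (hd v) \<Longrightarrow> reduced (u @ v)"
  unfolding reduced_def by (auto simp: successively_append_iff)

lemma reduced_carrier: "reduced w \<Longrightarrow> set w \<subseteq> carrier N"
  unfolding reduced_def using letters_carrier by auto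

lemma reduced_letters_factors: "reduced w \<Longrightarrow> set w \<subseteq> G \<union> H"
  unfolding reduced_def letters_def by blast

lemma same_factor_inv_inv:
  "c \<in> carrier N \<Longrightarrow> d \<in> carrier N \<Longrightarrow> same_factor (inv c) (inv d) \<longleftrightarrow> same_factor c d"
  using same_factor_inv same_factor_sym by metis

lemma reduced_rev_inv:
  assumes "reduced w" shows "reduced (rev (map (m_inv N) w))"
proof -
  have "\<not> same_factor (inv d) (inv c)" if "c \<in> set w" "d \<in> set w" "\<not> same_factor c d" for c d
    using that assms reduced_carrier same_factor_inv_inv same_factor_sym by blast
  then show ?thesis
    using assms inv_letter unfolding reduced_def successively_rev successively_map
    by (auto elim!: successively_mono)
qed

lemma word_prod_append:
  "set u \<subseteq> carrier N \<Longrightarrow> set v \<subseteq> carrier N \<Longrightarrow> word_prod (u @ v) = word_prod u \<otimes> word_prod v"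
  by (induction u) (auto simp: m_assoc foldr_mult_closed)

lemma word_prod_rev_inv: "set w \<subseteq> carrier N \<Longrightarrow> word_prod (rev (map (m_inv N) w)) = inv (word_prod w)"
proof (induction w)
  case (Cons c w)
  then have "word_prod (rev (map (m_inv N) (c # w))) = inv (word_prod w) \<otimes> inv c"
    using word_prod_append[of "rev (map (m_inv N) w)" "[inv c]"] by (auto simp del: foldr_append)
  then show ?case
    using Cons.prems by (simp add: inv_mult_group foldr_mult_closed)
qed simp

lemma hd_letter: "reduced w \<Longrightarrow> w \<noteq> [] \<Longrightarrow> hd w \<in> letters"
  unfolding reduced_def by auto

lemma last_letter: "reduced w \<Longrightarrow> w \<noteq> [] \<Longrightarrow> last w \<in> letters"
  unfolding reduced_def by auto

lemma reduced_Cons_replace: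
  assumes "reduced (b # v)" "c \<in> letters" "same_factor c b"
  shows "reduced (c # v)"
proof -
  have "\<not> same_factor c (hd v)" if "v \<noteq> []"
    using assms that hd_letter[of v] same_factor_trans[of b c "hd v"] same_factor_sym
    by (auto simp: reduced_Cons)
  then show ?thesis using assms by (auto simp: reduced_Cons)
qed

lemma reduced_snoc_replace:
  assumes "reduced (w @ [b])" "c \<in> letters" "same_factor c b"
  shows "reduced (w @ [c])"
proof -
  have "\<not> same_factor (last w) c" if "w \<noteq> []"
    using assms that last_letter[of w] same_factor_trans[of "last w" c b]
    unfolding reduced_def by (auto simp: successively_append_iff)
  then show ?thesis using assms unfolding reduced_def by (auto simp: successively_append_iff)
qed

lemma reduced_append_overlap: "reduced (w @ [c]) \<Longrightarrow> reduced (c # v) \<Longrightarrow> reduced (w @ c # v)"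
  unfolding reduced_def by (auto simp: successively_append_iff successively_Cons)

lemma inv_word_prod_mult_word_prod:
  assumes u: "set (a # u) \<subseteq> carrier N" and v: "set (b # v) \<subseteq> carrier N"
  shows "inv (word_prod (a # u)) \<otimes> word_prod (b # v) =
    word_prod (rev (map (m_inv N) u)) \<otimes> (inv a \<otimes> b) \<otimes> word_prod v"
proof -
  have "inv (word_prod (a # u)) = word_prod (rev (map (m_inv N) u) @ [inv a])"
    using word_prod_rev_inv[OF u] by simp
  also have "\<dots> = word_prod (rev (map (m_inv N) u)) \<otimes> inv a"
    using word_prod_append[of "rev (map (m_inv N) u)" "[inv a]"] u by (auto simp del: foldr_append)
  moreover have "word_prod (rev (map (m_inv N) u)) \<in> carrier N" "word_prod v \<in> carrier N"
    using u v by (auto intro!: foldr_mult_closed simp: subsetD)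
  ultimately show ?thesis using u v by (simp add: m_assoc)
qed

text \<open>Reading u backwards with inverted letters and then v gives a word with product 1; it is
  reduced once the two middle letters are merged when they lie in the same factor.\<close>
lemma reduced_word_prod_neq_of_hd_neq:
  assumes u: "reduced (a # u)" and v: "reduced (b # v)" and "a \<noteq> b"
  shows "word_prod (a # u) \<noteq> word_prod (b # v)"
proof
  assume eq: "word_prod (a # u) = word_prod (b # v)"
  let ?u' = "rev (map (m_inv N) u)"
  have a: "a \<in> letters" and b: "b \<in> letters" and ac: "a \<in> carrier N" and bc: "b \<in> carrier N"
    and uc: "set ?u' \<subseteq> carrier N" and vc: "set v \<subseteq> carrier N"
    using u v reduced_carrier[OF u] reduced_carrier[OF v] by (auto simp: reduced_Cons)
  have ru: "reduced (?u' @ [inv a])" using reduced_rev_inv[OF u] by simp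
  have "word_prod (b # v) \<in> carrier N" by (rule foldr_mult_closed[OF reduced_carrier[OF v]])
  then have "\<one> = inv (word_prod (a # u)) \<otimes> word_prod (b # v)" unfolding eq by simp
  then have prod_one: "word_prod ?u' \<otimes> (inv a \<otimes> b) \<otimes> word_prod v = \<one>"
    using inv_word_prod_mult_word_prod reduced_carrier[OF u] reduced_carrier[OF v] by simp
  show False
  proof (cases "same_factor a b")
    case True
    define c where "c = inv a \<otimes> b"
    have "a \<otimes> c = b" using ac bc unfolding c_def by (simp add: m_assoc[symmetric])
    then have "c \<noteq> \<one>" using \<open>a \<noteq> b\<close> ac by auto
    then have c: "c \<in> letters" "same_factor c b"
      using same_factor_mult[OF inv_letter[OF a] b] True same_factor_inv ac unfolding c_def by auto
    have "same_factor b (inv a)" using True same_factor_inv[OF ac] same_factor_sym by simp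
    then have "same_factor c (inv a)" by (rule same_factor_trans[OF c(1) b inv_letter[OF a] c(2)])
    then have "reduced (?u' @ c # v)"
      using reduced_append_overlap[OF reduced_snoc_replace[OF ru c(1)] reduced_Cons_replace[OF v c]] by simp
    moreover have "word_prod (?u' @ c # v) = word_prod ?u' \<otimes> c \<otimes> word_prod v"
      using word_prod_append[of ?u' "c # v"] uc vc letters_carrier[OF c(1)] foldr_mult_closed
      by (simp add: m_assoc del: foldr_append)
    ultimately show False using prod_one reduced_word_prod_neq_one unfolding c_def by fastforce
  next
    case False
    then have "reduced ((?u' @ [inv a]) @ b # v)"
      using reduced_append[OF ru v] same_factor_inv ac by simp
    moreover have "word_prod ((?u' @ [inv a]) @ b # v) = word_prod ?u' \<otimes> (inv a \<otimes> b) \<otimes> word_prod v"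
      using word_prod_append[of ?u' "inv a # b # v"] uc vc ac bc foldr_mult_closed
      by (simp add: m_assoc del: foldr_append)
    ultimately show False using prod_one reduced_word_prod_neq_one by fastforce
  qed
qed

lemma reduced_word_unique: "reduced u \<Longrightarrow> reduced v \<Longrightarrow> word_prod u = word_prod v \<Longrightarrow> u = v"
proof (induction u arbitrary: v)
  case Nil
  then show ?case using reduced_word_prod_neq_one by fastforce
next
  case (Cons a u)
  then obtain b v' where v: "v = b # v'"
    using reduced_word_prod_neq_one by (cases v) fastforce+
  then have "a = b" using Cons.prems reduced_word_prod_neq_of_hd_neq by blast
  have "word_prod u = word_prod v'"
  proof -
    have "set (a # u) \<subseteq> carrier N" "set v \<subseteq> carrier N"
      using reduced_carrier[OF Cons.prems(1)] reduced_carrier[OF Cons.prems(2)] by auto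
    then have "b \<in> carrier N" "word_prod u \<in> carrier N" "word_prod v' \<in> carrier N"
      using v foldr_mult_closed by auto
    moreover have "b \<otimes> word_prod u = b \<otimes> word_prod v'"
      using Cons.prems(3) unfolding v \<open>a = b\<close> by simp
    ultimately show ?thesis using l_cancel by blast
  qed
  then have "u = v'" using Cons.IH Cons.prems v by (simp add: reduced_Cons)
  then show ?case using v \<open>a = b\<close> by simp
qed

definition mult_letter :: "'a \<Rightarrow> 'a list \<Rightarrow> 'a list" where
  "mult_letter c w = (if c = \<one> then w else case w of [] \<Rightarrow> [c] | d # r \<Rightarrow>
     if \<not> same_factor c d then c # w else if c \<otimes> d = \<one> then r else (c \<otimes> d) # r)"

lemma mult_letter_one [simp]: "mult_letter \<one> w = w"
  and mult_letter_Nil [simp]: "c \<noteq> \<one> \<Longrightarrow> mult_letter c [] = [c]"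
  and mult_letter_Cons_other [simp]: "c \<noteq> \<one> \<Longrightarrow> \<not> same_factor c d \<Longrightarrow> mult_letter c (d # r) = c # d # r"
  and mult_letter_Cons_cancel [simp]:
    "c \<noteq> \<one> \<Longrightarrow> same_factor c d \<Longrightarrow> c \<otimes> d = \<one> \<Longrightarrow> mult_letter c (d # r) = r"
  and mult_letter_Cons_merge [simp]:
    "c \<noteq> \<one> \<Longrightarrow> same_factor c d \<Longrightarrow> c \<otimes> d \<noteq> \<one> \<Longrightarrow> mult_letter c (d # r) = (c \<otimes> d) # r"
  unfolding mult_letter_def by simp_all

lemma letters_iff: "c \<in> letters \<longleftrightarrow> c \<in> G \<union> H \<and> c \<noteq> \<one>"
  unfolding letters_def by blast

lemma mult_letter_cases:
  assumes "c \<in> G \<union> H" "reduced w"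
  obtains "c = \<one>" | "c \<in> letters" "c \<noteq> \<one>" "w = []"
  | d r where "c \<in> letters" "c \<noteq> \<one>" "w = d # r" "\<not> same_factor c d"
  | d r where "c \<in> letters" "c \<noteq> \<one>" "w = d # r" "same_factor c d" "c \<otimes> d = \<one>"
  | d r where "c \<in> letters" "c \<noteq> \<one>" "w = d # r" "same_factor c d" "c \<otimes> d \<noteq> \<one>"
  using assms letters_iff by (cases w) blast+

lemma reduced_mult_letter:
  assumes c: "c \<in> G \<union> H" and w: "reduced w"
  shows "reduced (mult_letter c w)"
  using c w
proof (cases rule: mult_letter_cases)
  case (5 d r)
  then have "c \<otimes> d \<in> letters" "same_factor (c \<otimes> d) d"
    using w same_factor_mult by (auto simp: reduced_Cons)
  then show ?thesis using 5 w reduced_Cons_replace by simp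
qed (use w in \<open>auto simp: reduced_Cons\<close>)

lemma word_prod_mult_letter:
  assumes c: "c \<in> G \<union> H" and w: "reduced w"
  shows "word_prod (mult_letter c w) = c \<otimes> word_prod w"
proof -
  have cc: "c \<in> carrier N" using c G_carrier H_carrier by blast
  have wc: "set w \<subseteq> carrier N" using reduced_carrier[OF w] .
  from c w show ?thesis
  proof (cases rule: mult_letter_cases)
    case (4 d r)
    then have "c \<otimes> (d \<otimes> word_prod r) = word_prod r"
      using cc wc foldr_mult_closed by (simp add: m_assoc[symmetric])
    then show ?thesis using 4 by simp
  next
    case (5 d r)
    then show ?thesis using cc wc foldr_mult_closed by (simp add: m_assoc)
  qed (use cc wc foldr_mult_closed in simp_all)
qed

lemma reduced_word_mult_exists:
  assumes "x \<in> generate N (G \<union> H)" "reduced v"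
  shows "\<exists>w. reduced w \<and> word_prod w = x \<otimes> word_prod v"
  using assms
proof (induction arbitrary: v rule: generate.induct)
  case one
  then show ?case using reduced_carrier foldr_mult_closed by auto
next
  case (incl c)
  then show ?case using reduced_mult_letter word_prod_mult_letter by blast
next
  case (inv c)
  then show ?case using reduced_mult_letter word_prod_mult_letter factor_inv_closed by blast
next
  case (eng x y)
  obtain w' where w': "reduced w'" "word_prod w' = y \<otimes> word_prod v" using eng.IH(2) eng.prems by blast
  obtain w where "reduced w" "word_prod w = x \<otimes> word_prod w'" using eng.IH(1) w'(1) by blast
  moreover have "x \<in> carrier N" "y \<in> carrier N" "word_prod v \<in> carrier N"
    using eng.hyps generate_G_H reduced_carrier[OF eng.prems] foldr_mult_closed by auto
  ultimately show ?case using w'(2) by (metis m_assoc)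
qed

definition normal_form :: "'a \<Rightarrow> 'a list" where
  "normal_form x = (THE w. reduced w \<and> word_prod w = x)"

lemma
  assumes "x \<in> carrier N"
  shows reduced_normal_form: "reduced (normal_form x)"
    and word_prod_normal_form: "word_prod (normal_form x) = x"
proof -
  have "\<exists>w. reduced w \<and> word_prod w = x"
    using reduced_word_mult_exists[of x "[]"] assms generate_G_H by simp
  then have "\<exists>!w. reduced w \<and> word_prod w = x" using reduced_word_unique by blast
  then have "reduced (normal_form x) \<and> word_prod (normal_form x) = x"
    unfolding normal_form_def by (rule theI')
  then show "reduced (normal_form x)" "word_prod (normal_form x) = x" by auto
qed

lemma normal_form_word_prod: "reduced w \<Longrightarrow> normal_form (word_prod w) = w"
  using reduced_word_unique reduced_normal_form word_prod_normal_form reduced_carrier foldr_mult_closed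
  by metis

lemma normal_form_one [simp]: "normal_form \<one> = []"
  using normal_form_word_prod[of "[]"] by simp

lemma normal_form_mult:
  "c \<in> G \<union> H \<Longrightarrow> x \<in> carrier N \<Longrightarrow> normal_form (c \<otimes> x) = mult_letter c (normal_form x)"
  using normal_form_word_prod[OF reduced_mult_letter] word_prod_mult_letter
    reduced_normal_form word_prod_normal_form
  by metis

lemma normal_form_Cons_letter: "x \<in> carrier N \<Longrightarrow> normal_form x = c # w \<Longrightarrow> c \<in> letters"
  using reduced_normal_form by (fastforce simp: reduced_Cons)

lemma free_prod_swap: "free_prod N H G"
  using free_product is_group unfolding free_prod_def free_prod_axioms_def free_product_def alternating_word_def
  by (auto simp: Int_commute Un_commute)

end

section \<open>The universal property of free products\<close>

lemma (in group) hom_eq_on_generate: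
  assumes "group T" "f \<in> hom G T" "f' \<in> hom G T" "A \<subseteq> carrier G" "\<And>x. x \<in> A \<Longrightarrow> f x = f' x"
    and "x \<in> generate G A"
  shows "f x = f' x"
proof -
  interpret f: group_hom G T f using assms by (simp add: group_hom_def group_hom_axioms_def is_group)
  interpret f': group_hom G T f' using assms by (simp add: group_hom_def group_hom_axioms_def is_group)
  from assms(6) show ?thesis
  proof (induction rule: generate.induct)
    case (inv h)
    then show ?case using assms by auto
  next
    case (eng x y)
    then show ?case using generate_in_carrier[OF assms(4)] by auto
  qed (use assms in auto)
qed

locale free_prod_extension = free_prod N G H + T: group T
  for N (structure) and G H and T +
  fixes \<phi> \<psi>
  assumes \<phi>_hom: "\<phi> \<in> hom (N\<lparr>carrier := G\<rparr>) T"
    and \<psi>_hom: "\<psi> \<in> hom (N\<lparr>carrier := H\<rparr>) T"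
begin

definition letter_image :: "'a \<Rightarrow> 'c" where
  "letter_image c = (if c \<in> G then \<phi> c else \<psi> c)"

definition word_image :: "'a list \<Rightarrow> 'c" where
  "word_image w = foldr (\<lambda>c y. letter_image c \<otimes>\<^bsub>T\<^esub> y) w \<one>\<^bsub>T\<^esub>"

definition extension :: "'a \<Rightarrow> 'c" where
  "extension x = word_image (normal_form x)"

lemma \<phi>_one: "\<phi> \<one> = \<one>\<^bsub>T\<^esub>" and \<psi>_one: "\<psi> \<one> = \<one>\<^bsub>T\<^esub>"
  using group_hom.hom_one[of "N\<lparr>carrier := G\<rparr>" T \<phi>] group_hom.hom_one[of "N\<lparr>carrier := H\<rparr>" T \<psi>]
    \<phi>_hom \<psi>_hom subgroup_imp_group[OF subgroup_G] subgroup_imp_group[OF subgroup_H] T.is_group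
  by (simp_all add: group_hom_def group_hom_axioms_def)

lemma letter_image_G: "c \<in> G \<Longrightarrow> letter_image c = \<phi> c"
  and letter_image_H: "c \<in> H \<Longrightarrow> letter_image c = \<psi> c"
  using G_inter_H \<phi>_one \<psi>_one unfolding letter_image_def by (metis IntI singletonD)+

lemma letter_image_closed: "c \<in> G \<union> H \<Longrightarrow> letter_image c \<in> carrier T"
  using \<phi>_hom \<psi>_hom letter_image_G letter_image_H by (auto simp: hom_def)

lemma letter_image_mult:
  "same_factor c d \<Longrightarrow> letter_image (c \<otimes> d) = letter_image c \<otimes>\<^bsub>T\<^esub> letter_image d"
  using \<phi>_hom \<psi>_hom letter_image_G letter_image_H subgroup.m_closed[OF subgroup_G]
    subgroup.m_closed[OF subgroup_H]
  unfolding same_factor_def by (auto simp: hom_def)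

lemma word_image_Cons [simp]: "word_image (c # w) = letter_image c \<otimes>\<^bsub>T\<^esub> word_image w"
  and word_image_Nil [simp]: "word_image [] = \<one>\<^bsub>T\<^esub>"
  unfolding word_image_def by simp_all

lemma word_image_closed: "set w \<subseteq> G \<union> H \<Longrightarrow> word_image w \<in> carrier T"
  by (induction w) (auto simp: letter_image_closed)

lemma word_image_mult_letter:
  assumes c: "c \<in> G \<union> H" and w: "reduced w"
  shows "word_image (mult_letter c w) = letter_image c \<otimes>\<^bsub>T\<^esub> word_image w"
proof -
  have cT: "letter_image c \<in> carrier T" using letter_image_closed[OF c] .
  have wT: "set w \<subseteq> G \<union> H" using reduced_letters_factors[OF w] .
  from c w show ?thesis
  proof (cases rule: mult_letter_cases)
    case 1
    then show ?thesis using word_image_closed[OF wT] \<phi>_one letter_image_G subgroup.one_closed[OF subgroup_G]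
      by simp
  next
    case (4 d r)
    then have "letter_image c \<otimes>\<^bsub>T\<^esub> letter_image d = \<one>\<^bsub>T\<^esub>"
      using letter_image_mult[of c d] \<phi>_one letter_image_G subgroup.one_closed[OF subgroup_G] by simp
    then show ?thesis
      using 4 cT wT letter_image_closed word_image_closed by (simp add: T.m_assoc[symmetric])
  next
    case (5 d r)
    then show ?thesis
      using cT wT letter_image_closed word_image_closed letter_image_mult by (simp add: T.m_assoc)
  qed (use cT in simp_all)
qed

lemma extension_one [simp]: "extension \<one> = \<one>\<^bsub>T\<^esub>"
  by (simp add: extension_def)

lemma extension_mult_letter:
  "c \<in> G \<union> H \<Longrightarrow> x \<in> carrier N \<Longrightarrow> extension (c \<otimes> x) = letter_image c \<otimes>\<^bsub>T\<^esub> extension x"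
  unfolding extension_def using normal_form_mult reduced_normal_form word_image_mult_letter by simp

lemma extension_closed: "x \<in> carrier N \<Longrightarrow> extension x \<in> carrier T"
  unfolding extension_def using word_image_closed reduced_letters_factors reduced_normal_form by blast

lemma extension_word_prod_mult:
  "set w \<subseteq> G \<union> H \<Longrightarrow> y \<in> carrier N \<Longrightarrow> extension (word_prod w \<otimes> y) = word_image w \<otimes>\<^bsub>T\<^esub> extension y"
proof (induction w)
  case Nil
  then show ?case using extension_closed by simp
next
  case (Cons c w)
  have cw: "c \<in> carrier N" "set w \<subseteq> carrier N" using Cons.prems G_carrier H_carrier by auto
  then have "extension (word_prod (c # w) \<otimes> y) = extension (c \<otimes> (word_prod w \<otimes> y))"
    using Cons.prems foldr_mult_closed by (simp add: m_assoc)
  also have "\<dots> = letter_image c \<otimes>\<^bsub>T\<^esub> (word_image w \<otimes>\<^bsub>T\<^esub> extension y)"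
    using Cons cw foldr_mult_closed extension_mult_letter by simp
  finally show ?case
    using Cons.prems letter_image_closed word_image_closed extension_closed by (simp add: T.m_assoc)
qed

lemma extension_hom: "extension \<in> hom N T"
proof (rule homI)
  fix x y assume x: "x \<in> carrier N" and y: "y \<in> carrier N"
  then have "extension (x \<otimes> y) = extension (word_prod (normal_form x) \<otimes> y)"
    using word_prod_normal_form by simp
  then show "extension (x \<otimes> y) = extension x \<otimes>\<^bsub>T\<^esub> extension y"
    using extension_word_prod_mult reduced_letters_factors reduced_normal_form x y
    unfolding extension_def[of x] by simp
qed (rule extension_closed)

lemma extension_letter:
  assumes "c \<in> G \<union> H" shows "extension c = letter_image c"
proof -
  have "c \<in> carrier N" using assms G_carrier H_carrier by blast
  then show ?thesis
    using extension_mult_letter[OF assms, of \<one>] letter_image_closed[OF assms] by simp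
qed

end

context free_prod
begin

lemma exists_hom_extension:
  assumes "group T" "\<phi> \<in> hom (N\<lparr>carrier := G\<rparr>) T" "\<psi> \<in> hom (N\<lparr>carrier := H\<rparr>) T"
  shows "\<exists>\<Phi> \<in> hom N T. (\<forall>g\<in>G. \<Phi> g = \<phi> g) \<and> (\<forall>h\<in>H. \<Phi> h = \<psi> h)"
proof -
  interpret free_prod_extension N G H T \<phi> \<psi>
    using assms free_prod_axioms unfolding free_prod_extension_def free_prod_extension_axioms_def
    by blast
  show ?thesis
    using extension_hom extension_letter letter_image_G letter_image_H by (intro bexI[of _ extension]) auto
qed

lemma retraction_onto_G: "\<exists>r \<in> hom N (N\<lparr>carrier := G\<rparr>). \<forall>g\<in>G. r g = g"
proof -
  have "(\<lambda>g. g) \<in> hom (N\<lparr>carrier := G\<rparr>) (N\<lparr>carrier := G\<rparr>)" by (rule homI) auto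
  moreover have "(\<lambda>h. \<one>) \<in> hom (N\<lparr>carrier := H\<rparr>) (N\<lparr>carrier := G\<rparr>)"
    using subgroup.one_closed[OF subgroup_G] by (intro homI) auto
  ultimately show ?thesis
    using exists_hom_extension[OF subgroup_imp_group[OF subgroup_G]] by blast
qed

text \<open>A retraction of N onto G maps K onto G, and images of perfect groups are perfect.\<close>
lemma perfect_subgroup_G_if_subset_perfect:
  assumes K: "K \<subseteq> carrier N" "derived N K = K" and GK: "G \<subseteq> K"
  shows "perfect_subgroup N G"
proof -
  obtain r where r: "r \<in> hom N (N\<lparr>carrier := G\<rparr>)" "\<forall>g\<in>G. r g = g"
    using retraction_onto_G by blast
  interpret r: group_hom N "N\<lparr>carrier := G\<rparr>" r
    using r(1) subgroup_imp_group[OF subgroup_G] by (simp add: group_hom_def group_hom_axioms_def is_group)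
  have "r ` K \<subseteq> G" using r(1) K(1) unfolding hom_def by auto
  moreover have "G \<subseteq> r ` K" using r(2) GK by (metis image_eqI subsetD subsetI)
  ultimately have "r ` K = G" ..
  then have "derived (N\<lparr>carrier := G\<rparr>) G = G"
    using r.derived_img[OF K(1)] K(2) by simp
  then show ?thesis
    using derived_consistent[OF subset_refl subgroup_G] subgroup_G unfolding perfect_subgroup_def by simp
qed

end

section \<open>Quotients by perfect normal subgroups\<close>

text \<open>Functions S \<Rightarrow> int with S acting by left translation model \<int>[S]; values outside the
  carrier of S play no role.\<close>
definition translate :: "('c, 'd) monoid_scheme \<Rightarrow> 'c \<Rightarrow> ('c \<Rightarrow> int) \<Rightarrow> 'c \<Rightarrow> int" where
  "translate S s f = (\<lambda>t. if t \<in> carrier S then f (inv\<^bsub>S\<^esub> s \<otimes>\<^bsub>S\<^esub> t) else f t)"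

definition delta :: "'c \<Rightarrow> 'c \<Rightarrow> int" where
  "delta u = (\<lambda>t. if t = u then 1 else 0)"

definition ZS_semidirect :: "('c, 'd) monoid_scheme \<Rightarrow> (('c \<Rightarrow> int) \<times> 'c) monoid" where
  "ZS_semidirect S =
     \<lparr>carrier = {p. snd p \<in> carrier S},
      monoid.mult = (\<lambda>p p'. (\<lambda>t. fst p t + translate S (snd p) (fst p') t, snd p \<otimes>\<^bsub>S\<^esub> snd p')),
      one = (\<lambda>_. 0, \<one>\<^bsub>S\<^esub>)\<rparr>"

lemma carrier_ZS_semidirect [simp]: "carrier (ZS_semidirect S) = {p. snd p \<in> carrier S}"
  and one_ZS_semidirect [simp]: "\<one>\<^bsub>ZS_semidirect S\<^esub> = (\<lambda>_. 0, \<one>\<^bsub>S\<^esub>)"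
  and mult_ZS_semidirect:
    "p \<otimes>\<^bsub>ZS_semidirect S\<^esub> p' = (\<lambda>t. fst p t + translate S (snd p) (fst p') t, snd p \<otimes>\<^bsub>S\<^esub> snd p')"
  unfolding ZS_semidirect_def by simp_all

context group
begin

lemma translate_one [simp]: "translate G \<one> f = f"
  unfolding translate_def by auto

lemma translate_translate:
  "s \<in> carrier G \<Longrightarrow> s' \<in> carrier G \<Longrightarrow> translate G s (translate G s' f) = translate G (s \<otimes> s') f"
  unfolding translate_def by (auto simp: inv_mult_group m_assoc)

lemma translate_add: "translate G s (\<lambda>t. f t + f' t) t = translate G s f t + translate G s f' t"
  and translate_diff: "translate G s (\<lambda>t. f t - f' t) t = translate G s f t - translate G s f' t"
  and translate_zero [simp]: "translate G s (\<lambda>t. 0) = (\<lambda>t. 0)"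
  unfolding translate_def by auto

lemma translate_delta:
  assumes "s \<in> carrier G" "u \<in> carrier G" shows "translate G s (delta u) = delta (s \<otimes> u)"
proof
  fix t
  have "inv s \<otimes> t = u \<longleftrightarrow> t = s \<otimes> u" if "t \<in> carrier G"
    using assms that by (metis inv_solve_left m_closed inv_closed)
  then show "translate G s (delta u) t = delta (s \<otimes> u) t"
    using assms unfolding translate_def delta_def by auto
qed

lemma group_ZS_semidirect: "group (ZS_semidirect G)"
proof (rule groupI)
  fix x y z assume "x \<in> carrier (ZS_semidirect G)" "y \<in> carrier (ZS_semidirect G)"
    "z \<in> carrier (ZS_semidirect G)"
  then show "x \<otimes>\<^bsub>ZS_semidirect G\<^esub> y \<otimes>\<^bsub>ZS_semidirect G\<^esub> z =
      x \<otimes>\<^bsub>ZS_semidirect G\<^esub> (y \<otimes>\<^bsub>ZS_semidirect G\<^esub> z)"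
    by (simp add: mult_ZS_semidirect translate_add translate_translate m_assoc add.assoc)
next
  fix x assume x: "x \<in> carrier (ZS_semidirect G)"
  then show "\<one>\<^bsub>ZS_semidirect G\<^esub> \<otimes>\<^bsub>ZS_semidirect G\<^esub> x = x" by (simp add: mult_ZS_semidirect)
  obtain f s where fs: "x = (f, s)" "s \<in> carrier G" using x by (cases x) auto
  let ?y = "(\<lambda>t. - translate G (inv s) f t, inv s)"
  have "?y \<otimes>\<^bsub>ZS_semidirect G\<^esub> x = \<one>\<^bsub>ZS_semidirect G\<^esub>"
    using fs by (simp add: mult_ZS_semidirect)
  then show "\<exists>y\<in>carrier (ZS_semidirect G). y \<otimes>\<^bsub>ZS_semidirect G\<^esub> x = \<one>\<^bsub>ZS_semidirect G\<^esub>"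
    using fs by (intro bexI[of _ ?y]) auto
qed (auto simp: mult_ZS_semidirect)

lemma derived_ZS_semidirect_kernel:
  assumes "A \<subseteq> {p. snd p = \<one>}"
  shows "derived (ZS_semidirect G) A \<subseteq> {\<one>\<^bsub>ZS_semidirect G\<^esub>}"
proof -
  interpret ZS: group "ZS_semidirect G" by (rule group_ZS_semidirect)
  have inv_kernel: "inv\<^bsub>ZS_semidirect G\<^esub> p = (\<lambda>t. - fst p t, \<one>)" if "snd p = \<one>" for p
    using that by (intro ZS.inv_equality) (auto simp: mult_ZS_semidirect)
  have "derived_set (ZS_semidirect G) A \<subseteq> {\<one>\<^bsub>ZS_semidirect G\<^esub>}"
  proof
    fix z assume "z \<in> derived_set (ZS_semidirect G) A"
    then obtain p p' where "p \<in> A" "p' \<in> A" and z: "z = p \<otimes>\<^bsub>ZS_semidirect G\<^esub> p'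
      \<otimes>\<^bsub>ZS_semidirect G\<^esub> inv\<^bsub>ZS_semidirect G\<^esub> p \<otimes>\<^bsub>ZS_semidirect G\<^esub> inv\<^bsub>ZS_semidirect G\<^esub> p'"
      by blast
    then have "snd p = \<one>" "snd p' = \<one>" using assms by auto
    then show "z \<in> {\<one>\<^bsub>ZS_semidirect G\<^esub>}" unfolding z by (simp add: inv_kernel mult_ZS_semidirect)
  qed
  then show ?thesis
    unfolding derived_def by (rule ZS.generate_subgroup_incl[OF _ ZS.triv_subgroup])
qed

end

lemma (in group_hom) hom_foldr_mult:
  "set xs \<subseteq> carrier G \<Longrightarrow> h (foldr (\<otimes>\<^bsub>G\<^esub>) xs \<one>\<^bsub>G\<^esub>) = foldr (\<otimes>\<^bsub>H\<^esub>) (map h xs) \<one>\<^bsub>H\<^esub>"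
  by (induction xs) (auto simp: G.foldr_mult_closed)

(* Keep N Mod K an abstract group instead of unfolding its unit and product into cosets. *)
declare one_FactGroup [simp del] mult_FactGroup [simp del]

locale perfect_quotient = free_prod N G H for N (structure) and G H +
  fixes K
  assumes normal_K: "K \<lhd> N" and perfect_K: "derived N K = K"
begin

abbreviation proj :: "'a \<Rightarrow> 'a set" where
  "proj x \<equiv> K #> x"

abbreviation coset_prod :: "'a set list \<Rightarrow> 'a set" where
  "coset_prod ys \<equiv> foldr (\<otimes>\<^bsub>N Mod K\<^esub>) ys \<one>\<^bsub>N Mod K\<^esub>"

lemma group_Mod: "group (N Mod K)"
  using normal_K by (rule normal.factorgroup_is_group)

lemma proj_group_hom: "group_hom N (N Mod K) proj"
  using normal.r_coset_hom_Mod[OF normal_K] group_Mod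
  by (simp add: group_hom_def group_hom_axioms_def is_group)

lemma subgroup_K: "subgroup K N"
  using normal_K normal_def by blast

lemma proj_eq_one_iff: "x \<in> carrier N \<Longrightarrow> proj x = \<one>\<^bsub>N Mod K\<^esub> \<longleftrightarrow> x \<in> K"
  using coset_join1[of K x] coset_join2[of x K] subgroup_K by (auto simp: one_FactGroup)

lemma proj_surj: "proj ` carrier N = carrier (N Mod K)"
  using carrier_FactGroup by auto

lemma proj_image_trivial_iff: "A \<subseteq> carrier N \<Longrightarrow> proj ` A \<subseteq> {\<one>\<^bsub>N Mod K\<^esub>} \<longleftrightarrow> A \<subseteq> K"
  using proj_eq_one_iff by blast

sublocale Q: group "N Mod K"
  by (rule group_Mod)

definition factor_image :: "bool \<Rightarrow> 'a set set" where
  "factor_image b = proj ` (if b then G else H)"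

definition fox_letter :: "bool \<times> 'a set \<Rightarrow> ('a set \<Rightarrow> int) \<times> 'a set" where
  "fox_letter p = (if fst p then (\<lambda>t. 0) else (\<lambda>t. delta (snd p) t - delta \<one>\<^bsub>N Mod K\<^esub> t), snd p)"

lemma snd_fox_letter [simp]: "snd (fox_letter p) = snd p"
  unfolding fox_letter_def by simp

lemma factor_image_carrier: "y \<in> factor_image b \<Longrightarrow> y \<in> carrier (N Mod K)"
  unfolding factor_image_def using proj_surj G_carrier H_carrier by (auto split: if_splits)

lemma fox_letter_mult:
  assumes "y \<in> carrier (N Mod K)" "y' \<in> carrier (N Mod K)"
  shows "fox_letter (b, y \<otimes>\<^bsub>N Mod K\<^esub> y') = fox_letter (b, y) \<otimes>\<^bsub>ZS_semidirect (N Mod K)\<^esub> fox_letter (b, y')"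
proof -
  have "translate (N Mod K) y (delta \<one>\<^bsub>N Mod K\<^esub>) = delta y"
    by (metis Q.one_closed Q.r_one Q.translate_delta assms(1))
  then have "translate (N Mod K) y (\<lambda>t. delta y' t - delta \<one>\<^bsub>N Mod K\<^esub> t) t =
      delta (y \<otimes>\<^bsub>N Mod K\<^esub> y') t - delta y t" for t
    using assms by (simp add: Q.translate_diff Q.translate_delta)
  then show ?thesis unfolding fox_letter_def by (auto simp: mult_ZS_semidirect)
qed

lemma fox_hom_exists:
  "\<exists>\<Phi> \<in> hom N (ZS_semidirect (N Mod K)).
     (\<forall>g\<in>G. \<Phi> g = fox_letter (True, proj g)) \<and> (\<forall>h\<in>H. \<Phi> h = fox_letter (False, proj h))"
proof -
  interpret proj: group_hom N "N Mod K" proj by (rule proj_group_hom)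
  have "(\<lambda>x. fox_letter (b, proj x)) \<in> hom (N\<lparr>carrier := C\<rparr>) (ZS_semidirect (N Mod K))"
    if "C \<subseteq> carrier N" for b C
    using that fox_letter_mult by (intro homI) (auto simp: fox_letter_def subsetD)
  then show ?thesis
    using exists_hom_extension[OF Q.group_ZS_semidirect] G_carrier H_carrier by blast
qed

text \<open>The image of the perfect group K lies in the abelian group of pairs (f, 1), hence it
  is trivial.\<close>
lemma fox_hom:
  obtains \<Phi> where "\<Phi> \<in> hom N (ZS_semidirect (N Mod K))"
    "\<And>g. g \<in> G \<Longrightarrow> \<Phi> g = fox_letter (True, proj g)" "\<And>h. h \<in> H \<Longrightarrow> \<Phi> h = fox_letter (False, proj h)"
    "\<And>k. k \<in> K \<Longrightarrow> \<Phi> k = \<one>\<^bsub>ZS_semidirect (N Mod K)\<^esub>"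
proof -
  obtain \<Phi> where \<Phi>: "\<Phi> \<in> hom N (ZS_semidirect (N Mod K))"
    "\<forall>g\<in>G. \<Phi> g = fox_letter (True, proj g)" "\<forall>h\<in>H. \<Phi> h = fox_letter (False, proj h)"
    using fox_hom_exists by blast
  interpret \<Phi>: group_hom N "ZS_semidirect (N Mod K)" \<Phi>
    using \<Phi>(1) Q.group_ZS_semidirect by (simp add: group_hom_def group_hom_axioms_def is_group)
  have snd_hom: "(\<lambda>x. snd (\<Phi> x)) \<in> hom N (N Mod K)"
    using \<Phi>.hom_closed \<Phi>.hom_mult by (intro homI) (auto simp: mult_ZS_semidirect)
  have agree: "snd (\<Phi> x) = proj x" if "x \<in> G \<union> H" for x
    using that \<Phi>(2,3) by (auto simp: fox_letter_def)
  have snd_\<Phi>: "snd (\<Phi> x) = proj x" if "x \<in> carrier N" for x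
    using hom_eq_on_generate[where A = "G \<union> H", OF group_Mod snd_hom group_hom.homh[OF proj_group_hom] _ agree] that
      G_carrier H_carrier generate_G_H by simp
  have K_carrier: "K \<subseteq> carrier N" using subgroup_K subgroup.subset by blast
  have "snd (\<Phi> k) = \<one>\<^bsub>N Mod K\<^esub>" if "k \<in> K" for k
    using snd_\<Phi> proj_eq_one_iff K_carrier that by (simp add: subsetD)
  then have "\<Phi> ` K \<subseteq> {p. snd p = \<one>\<^bsub>N Mod K\<^esub>}" by blast
  then have "\<Phi> ` K \<subseteq> {\<one>\<^bsub>ZS_semidirect (N Mod K)\<^esub>}"
    using Q.derived_ZS_semidirect_kernel[of "\<Phi> ` K"] \<Phi>.derived_img[OF K_carrier] perfect_K by simp
  then show ?thesis using that \<Phi> by blast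
qed

definition tagged_word :: "(bool \<times> 'a set) list \<Rightarrow> bool" where
  "tagged_word ys \<longleftrightarrow> (\<forall>p\<in>set ys. snd p \<in> factor_image (fst p) \<and> snd p \<noteq> \<one>\<^bsub>N Mod K\<^esub>) \<and>
     successively (\<lambda>p p'. fst p \<noteq> fst p') ys"

lemma fox_product_trivial:
  assumes "\<forall>p\<in>set ys. snd p \<in> factor_image (fst p)" and "coset_prod (map snd ys) = \<one>\<^bsub>N Mod K\<^esub>"
  shows "foldr (\<otimes>\<^bsub>ZS_semidirect (N Mod K)\<^esub>) (map fox_letter ys) \<one>\<^bsub>ZS_semidirect (N Mod K)\<^esub> =
    \<one>\<^bsub>ZS_semidirect (N Mod K)\<^esub>"
proof -
  obtain \<Phi> where \<Phi>: "\<Phi> \<in> hom N (ZS_semidirect (N Mod K))"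
    "\<And>g. g \<in> G \<Longrightarrow> \<Phi> g = fox_letter (True, proj g)" "\<And>h. h \<in> H \<Longrightarrow> \<Phi> h = fox_letter (False, proj h)"
    "\<And>k. k \<in> K \<Longrightarrow> \<Phi> k = \<one>\<^bsub>ZS_semidirect (N Mod K)\<^esub>"
    using fox_hom by blast
  interpret \<Phi>: group_hom N "ZS_semidirect (N Mod K)" \<Phi>
    using \<Phi>(1) Q.group_ZS_semidirect by (simp add: group_hom_def group_hom_axioms_def is_group)
  interpret proj: group_hom N "N Mod K" proj by (rule proj_group_hom)
  obtain lift where lift: "\<forall>p\<in>set ys. lift p \<in> (if fst p then G else H) \<and> proj (lift p) = snd p"
    using bchoice[of "set ys" "\<lambda>p x. x \<in> (if fst p then G else H) \<and> proj x = snd p"] assms(1)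
    unfolding factor_image_def by fastforce
  define xs where "xs = map lift ys"
  have xs: "set xs \<subseteq> carrier N" using lift G_carrier H_carrier unfolding xs_def by (auto split: if_splits)
  have "proj (lift p) = snd p \<and> \<Phi> (lift p) = fox_letter p" if "p \<in> set ys" for p
  proof -
    have l: "lift p \<in> (if fst p then G else H)" "proj (lift p) = snd p" using lift that by auto
    then have "\<Phi> (lift p) = fox_letter (fst p, proj (lift p))" using \<Phi>(2,3) by (cases "fst p") auto
    then show ?thesis using l by simp
  qed
  then have "map proj xs = map snd ys" and "map \<Phi> xs = map fox_letter ys"
    unfolding xs_def by simp_all
  then have "proj (word_prod xs) = \<one>\<^bsub>N Mod K\<^esub>" and \<Phi>_xs: "\<Phi> (word_prod xs) = 
    foldr (\<otimes>\<^bsub>ZS_semidirect (N Mod K)\<^esub>) (map fox_letter ys) \<one>\<^bsub>ZS_semidirect (N Mod K)\<^esub>"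
    using proj.hom_foldr_mult[OF xs] \<Phi>.hom_foldr_mult[OF xs] assms(2) by simp_all
  then have "word_prod xs \<in> K" using proj_eq_one_iff foldr_mult_closed[OF xs] by blast
  then show ?thesis using \<Phi>(4) \<Phi>_xs by simp
qed

fun fox_chain :: "'a set \<Rightarrow> (bool \<times> 'a set) list \<Rightarrow> 'a set \<Rightarrow> int" where
  "fox_chain s [] = (\<lambda>t. 0)"
| "fox_chain s (p # ys) = (\<lambda>t. (if fst p then 0 else delta (s \<otimes>\<^bsub>N Mod K\<^esub> snd p) t - delta s t)
     + fox_chain (s \<otimes>\<^bsub>N Mod K\<^esub> snd p) ys t)"

lemma translate_fox_product:
  assumes "set (map snd ys) \<subseteq> carrier (N Mod K)" "s \<in> carrier (N Mod K)"
  shows "translate (N Mod K) s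
    (fst (foldr (\<otimes>\<^bsub>ZS_semidirect (N Mod K)\<^esub>) (map fox_letter ys) \<one>\<^bsub>ZS_semidirect (N Mod K)\<^esub>)) =
    fox_chain s ys"
  using assms
proof (induction ys arbitrary: s)
  case (Cons p ys)
  let ?P = "foldr (\<otimes>\<^bsub>ZS_semidirect (N Mod K)\<^esub>) (map fox_letter ys) \<one>\<^bsub>ZS_semidirect (N Mod K)\<^esub>"
  have p: "snd p \<in> carrier (N Mod K)" using Cons.prems by simp
  have "translate (N Mod K) s (delta \<one>\<^bsub>N Mod K\<^esub>) = delta s"
    by (metis Q.one_closed Q.r_one Q.translate_delta Cons.prems(2))
  then have "translate (N Mod K) s (fst (fox_letter p)) t =
      (if fst p then 0 else delta (s \<otimes>\<^bsub>N Mod K\<^esub> snd p) t - delta s t)" for t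
    using Cons.prems p by (simp add: fox_letter_def Q.translate_diff Q.translate_delta)
  moreover have "translate (N Mod K) s (translate (N Mod K) (snd p) (fst ?P)) =
      fox_chain (s \<otimes>\<^bsub>N Mod K\<^esub> snd p) ys"
    using Cons.IH[of "s \<otimes>\<^bsub>N Mod K\<^esub> snd p"] Cons.prems p by (simp add: Q.translate_translate)
  moreover have "foldr (\<otimes>\<^bsub>ZS_semidirect (N Mod K)\<^esub>) (map fox_letter (p # ys)) \<one>\<^bsub>ZS_semidirect (N Mod K)\<^esub>
      = fox_letter p \<otimes>\<^bsub>ZS_semidirect (N Mod K)\<^esub> ?P" by simp
  ultimately show ?case
    unfolding mult_ZS_semidirect[where p = "fox_letter p" and p' = ?P] by (auto simp: Q.translate_add)
qed simp

lemma coset_prod_closed: "set ys \<subseteq> carrier (N Mod K) \<Longrightarrow> coset_prod ys \<in> carrier (N Mod K)"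
  by (induction ys) auto

lemma fox_chain_eq_zero:
  assumes "set (map snd ys) \<subseteq> carrier (N Mod K)" "s \<in> carrier (N Mod K)"
    and "\<And>k. k \<le> length ys \<Longrightarrow> s \<otimes>\<^bsub>N Mod K\<^esub> coset_prod (take k (map snd ys)) \<noteq> t"
  shows "fox_chain s ys t = 0"
  using assms
proof (induction ys arbitrary: s)
  case (Cons p ys)
  have p: "snd p \<in> carrier (N Mod K)" and ys: "set (map snd ys) \<subseteq> carrier (N Mod K)"
    using Cons.prems by auto
  have "(s \<otimes>\<^bsub>N Mod K\<^esub> snd p) \<otimes>\<^bsub>N Mod K\<^esub> coset_prod (take k (map snd ys)) \<noteq> t"
    if "k \<le> length ys" for k
    using Cons.prems(3)[of "Suc k"] that p Cons.prems(2) ys set_take_subset[of k "map snd ys"]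
      coset_prod_closed[of "take k (map snd ys)"]
    by (simp add: Q.m_assoc)
  then have "fox_chain (s \<otimes>\<^bsub>N Mod K\<^esub> snd p) ys t = 0"
    using Cons.IH[OF ys] Cons.prems(2) p by simp
  moreover have "s \<noteq> t" "s \<otimes>\<^bsub>N Mod K\<^esub> snd p \<noteq> t"
    using Cons.prems(3)[of 0] Cons.prems(3)[of 1] Cons.prems(2) p by simp_all
  ultimately show ?case by (simp add: delta_def)
qed simp

lemma tagged_word_Cons:
  "tagged_word (p # ys) \<longleftrightarrow> snd p \<in> factor_image (fst p) \<and> snd p \<noteq> \<one>\<^bsub>N Mod K\<^esub> \<and> tagged_word ys \<and>
     (ys = [] \<or> fst p \<noteq> fst (hd ys))"
  unfolding tagged_word_def by (auto simp: successively_Cons)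

lemma tagged_word_take: "tagged_word ys \<Longrightarrow> tagged_word (take k ys)"
  unfolding tagged_word_def using set_take_subset[of k ys]
  by (metis append_take_drop_id subsetD successively_append_iff)

lemma tagged_word_carrier: "tagged_word ys \<Longrightarrow> set (map snd ys) \<subseteq> carrier (N Mod K)"
  unfolding tagged_word_def using factor_image_carrier by auto

text \<open>In a shortest relation the partial products are pairwise distinct, so the coefficient
  of the first partial product in the Fox derivative comes from the first two letters only.\<close>
lemma shortest_tagged_relation_impossible:
  assumes tw: "tagged_word (p # ys)" and rel: "coset_prod (map snd (p # ys)) = \<one>\<^bsub>N Mod K\<^esub>"
    and shortest: "\<And>k. 0 < k \<Longrightarrow> k \<le> length ys \<Longrightarrow> coset_prod (take k (map snd ys)) \<noteq> \<one>\<^bsub>N Mod K\<^esub>"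
  shows False
proof -
  have ysc: "set (map snd (p # ys)) \<subseteq> carrier (N Mod K)" using tagged_word_carrier[OF tw] .
  have y1: "snd p \<in> carrier (N Mod K)" "snd p \<noteq> \<one>\<^bsub>N Mod K\<^esub>" using ysc tw by (auto simp: tagged_word_Cons)
  obtain p' r where ys: "ys = p' # r" using rel y1 by (cases ys) auto
  have y2: "snd p' \<in> carrier (N Mod K)" "snd p' \<noteq> \<one>\<^bsub>N Mod K\<^esub>" "fst p \<noteq> fst p'"
    using ysc tw ys by (auto simp: tagged_word_Cons)
  have rc: "set (map snd r) \<subseteq> carrier (N Mod K)" using ysc ys by auto
  have "fox_chain \<one>\<^bsub>N Mod K\<^esub> (p # ys) = (\<lambda>t. 0)"
    using translate_fox_product[OF ysc Q.one_closed] fox_product_trivial[OF _ rel] tw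
    by (simp add: tagged_word_def)
  then have chain0: "fox_chain \<one>\<^bsub>N Mod K\<^esub> (p # ys) (snd p) = 0" by simp
  have "snd p \<otimes>\<^bsub>N Mod K\<^esub> snd p' \<otimes>\<^bsub>N Mod K\<^esub> coset_prod (take k (map snd r)) \<noteq> snd p"
    if "k \<le> length r" for k
  proof -
    have "coset_prod (take (Suc k) (map snd ys)) \<noteq> \<one>\<^bsub>N Mod K\<^esub>"
      using shortest[of "Suc k"] that ys by simp
    moreover have "coset_prod (take k (map snd r)) \<in> carrier (N Mod K)"
      using rc set_take_subset coset_prod_closed by (metis subset_trans)
    ultimately show ?thesis using y1 y2 ys by (simp add: Q.m_assoc)
  qed
  then have "fox_chain (snd p \<otimes>\<^bsub>N Mod K\<^esub> snd p') r (snd p) = 0"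
    using fox_chain_eq_zero[OF rc] y1 y2 by simp
  moreover have "snd p \<otimes>\<^bsub>N Mod K\<^esub> snd p' \<noteq> snd p" using y1 y2 by simp
  ultimately show False
    using chain0 y1 y2 ys by (cases "fst p") (auto simp: delta_def)
qed

lemma no_tagged_relation: "tagged_word ys \<Longrightarrow> ys \<noteq> [] \<Longrightarrow> coset_prod (map snd ys) \<noteq> \<one>\<^bsub>N Mod K\<^esub>"
proof (induction "length ys" arbitrary: ys rule: less_induct)
  case less
  then obtain p ys' where ys: "ys = p # ys'" by (cases ys) auto
  have "coset_prod (take k (map snd ys')) \<noteq> \<one>\<^bsub>N Mod K\<^esub>" if "0 < k" "k \<le> length ys'" for k
  proof -
    have "take k ys' \<noteq> []" "length (take k ys') < length ys" using that ys by auto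
    then show ?thesis
      using less.hyps[of "take k ys'"] less.prems ys tagged_word_take[of ys' k]
      by (simp add: tagged_word_Cons take_map)
  qed
  then show ?case using shortest_tagged_relation_impossible less.prems ys by blast
qed

lemma tagged_word_of_alternating:
  assumes xs: "alternating_word (N Mod K) (proj ` G) (proj ` H) xs"
  shows "tagged_word (map (\<lambda>x. (x \<in> proj ` G, x)) xs)"
proof -
  have xs_set: "set xs \<subseteq> (proj ` G \<union> proj ` H) - {\<one>\<^bsub>N Mod K\<^esub>}"
    using xs unfolding alternating_word_def by auto
  have "successively (\<lambda>x y. (x \<in> proj ` G) \<noteq> (y \<in> proj ` G)) xs"
    unfolding successively_conv_nth
  proof (intro allI impI)
    fix i assume i: "Suc i < length xs"
    then have "xs ! i \<in> set xs" "xs ! Suc i \<in> set xs" by simp_all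
    then have "xs ! i \<in> proj ` G \<union> proj ` H" "xs ! Suc i \<in> proj ` G \<union> proj ` H"
      using xs_set by blast+
    then show "(xs ! i \<in> proj ` G) \<noteq> (xs ! Suc i \<in> proj ` G)"
      using xs i unfolding alternating_word_def by blast
  qed
  then show ?thesis
    using xs_set unfolding tagged_word_def factor_image_def successively_map by auto
qed

lemma quotient_free_product: "free_product (N Mod K) (proj ` G) (proj ` H)"
proof -
  interpret proj: group_hom N "N Mod K" proj by (rule proj_group_hom)
  have sub: "subgroup (proj ` G) (N Mod K)" "subgroup (proj ` H) (N Mod K)"
    using proj.subgroup_img_is_subgroup subgroup_G subgroup_H by auto
  have triv: "c = \<one>\<^bsub>N Mod K\<^esub>" if "c \<in> proj ` G" "c \<in> proj ` H" for c
  proof (rule ccontr)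
    assume c: "c \<noteq> \<one>\<^bsub>N Mod K\<^esub>"
    have cc: "c \<in> carrier (N Mod K)" using that(1) subgroup.subset[OF sub(1)] by blast
    have "inv\<^bsub>N Mod K\<^esub> c \<in> proj ` H" using subgroup.m_inv_closed[OF sub(2) that(2)] .
    then have "tagged_word [(True, c), (False, inv\<^bsub>N Mod K\<^esub> c)]"
      "coset_prod (map snd [(True, c), (False, inv\<^bsub>N Mod K\<^esub> c)]) = \<one>\<^bsub>N Mod K\<^esub>"
      using that c cc by (auto simp: tagged_word_def factor_image_def)
    then show False using no_tagged_relation by blast
  qed
  have inter: "proj ` G \<inter> proj ` H = {\<one>\<^bsub>N Mod K\<^esub>}"
  proof
    show "proj ` G \<inter> proj ` H \<subseteq> {\<one>\<^bsub>N Mod K\<^esub>}" using triv by blast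
    show "{\<one>\<^bsub>N Mod K\<^esub>} \<subseteq> proj ` G \<inter> proj ` H"
      using subgroup.one_closed[OF sub(1)] subgroup.one_closed[OF sub(2)] by blast
  qed
  have gen: "generate (N Mod K) (proj ` G \<union> proj ` H) = carrier (N Mod K)"
    using proj.generate_img[of "G \<union> H"] G_carrier H_carrier generate_G_H proj_surj
    by (simp add: image_Un)
  have alt: "coset_prod xs \<noteq> \<one>\<^bsub>N Mod K\<^esub>" if xs: "alternating_word (N Mod K) (proj ` G) (proj ` H) xs" for xs
    using no_tagged_relation[OF tagged_word_of_alternating[OF xs]] xs
    by (auto simp: comp_def alternating_word_def)
  show ?thesis
    unfolding free_product_def using sub inter gen alt by simp
qed

end

section \<open>Ping-pong\<close>

context free_prod
begin

lemma normal_form_mult_other: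
  assumes "c \<in> letters" "x \<in> carrier N" "normal_form x = d # t" "\<not> same_factor c d"
  shows "normal_form (c \<otimes> x) = c # d # t"
  using assms normal_form_mult letters_iff by simp

lemma normal_form_mult_cancel:
  assumes c: "c \<in> letters" and "x \<in> carrier N" "normal_form x = inv c # t"
  shows "normal_form (c \<otimes> x) = t"
proof -
  have "same_factor c (inv c)"
    using same_factor_iff[OF c inv_letter[OF c]] inv_in_G_iff letters_carrier[OF c] by simp
  then show ?thesis
    using assms normal_form_mult letters_iff letters_carrier by simp
qed

lemma normal_form_mult_same_factor:
  assumes c: "c \<in> letters" and x: "x \<in> carrier N" and no_cancel: "\<nexists>t. normal_form x = inv c # t"
  obtains d t where "normal_form (c \<otimes> x) = d # t" "same_factor c d"
proof (cases "normal_form x")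
  case Nil
  then show ?thesis using that c x normal_form_mult letters_iff same_factor_refl by simp
next
  case (Cons d r)
  have d: "d \<in> letters" using normal_form_Cons_letter[OF x Cons] .
  have cc: "c \<in> carrier N" and dc: "d \<in> carrier N" using c d letters_carrier by auto
  show ?thesis
  proof (cases "same_factor c d")
    case True
    have "c \<otimes> d \<noteq> \<one>"
    proof
      assume "c \<otimes> d = \<one>"
      then have "inv c = d" using inv_equality[OF inv_comm] cc dc by blast
      then show False using no_cancel Cons by blast
    qed
    moreover have "same_factor (c \<otimes> d) d" "c \<otimes> d \<in> letters"
      using same_factor_mult[OF c d True] \<open>c \<otimes> d \<noteq> \<one>\<close> by auto
    ultimately have "normal_form (c \<otimes> x) = (c \<otimes> d) # r" "same_factor c (c \<otimes> d)"
      using True Cons normal_form_mult[OF _ x] c d letters_iff same_factor_iff by auto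
    then show ?thesis using that by blast
  next
    case False
    then show ?thesis using that normal_form_mult_other[OF c x Cons] same_factor_refl[OF c] by blast
  qed
qed

lemma normal_form_ping:
  assumes letters: "p \<in> letters" "q \<in> letters" "r \<in> letters" "u \<in> letters"
    and factors: "\<not> same_factor p q" "same_factor p r" "same_factor q u"
    and s: "s \<in> carrier N" "\<nexists>t. normal_form s = inv u # inv r # t"
  shows "\<exists>t. normal_form (p \<otimes> (q \<otimes> (r \<otimes> (u \<otimes> s)))) = p # q # t"
proof -
  have G_iff: "r \<in> G \<longleftrightarrow> p \<in> G" "u \<in> G \<longleftrightarrow> q \<in> G" "q \<in> G \<longleftrightarrow> p \<notin> G"
    using factors same_factor_iff letters by auto
  have us: "u \<otimes> s \<in> carrier N" using s letters letters_carrier by auto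
  have "\<nexists>t. normal_form (u \<otimes> s) = inv r # t"
  proof (cases "\<exists>t. normal_form s = inv u # t")
    case True
    then show ?thesis using s normal_form_mult_cancel[OF letters(4) s(1)] by auto
  next
    case False
    then obtain d t where "normal_form (u \<otimes> s) = d # t" "same_factor u d"
      using normal_form_mult_same_factor[OF letters(4) s(1)] by blast
    moreover have "\<not> same_factor u (inv r)"
      using same_factor_iff[OF letters(4) inv_letter[OF letters(3)]] inv_in_G_iff letters_carrier
        letters G_iff by auto
    ultimately show ?thesis by auto
  qed
  then obtain d t where d: "normal_form (r \<otimes> (u \<otimes> s)) = d # t" "same_factor r d"
    using normal_form_mult_same_factor[OF letters(3) us] by blast
  have rus: "r \<otimes> (u \<otimes> s) \<in> carrier N" using us letters letters_carrier by auto
  have "d \<in> letters" using normal_form_Cons_letter[OF rus d(1)] .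
  then have "\<not> same_factor q d"
    using d(2) same_factor_iff letters G_iff by auto
  then have "normal_form (q \<otimes> (r \<otimes> (u \<otimes> s))) = q # d # t"
    using normal_form_mult_other[OF letters(2) rus d(1)] by simp
  then show ?thesis
    using normal_form_mult_other[OF letters(1) _ _ factors(1)] rus letters letters_carrier by auto
qed

end

lemma (in group) pow_mult_in_attracting_set:
  assumes x: "x \<in> carrier G" and disj: "A \<inter> B = {}"
    and step: "\<And>s. s \<in> carrier G \<Longrightarrow> s \<notin> B \<Longrightarrow> x \<otimes> s \<in> A"
  shows "s \<in> carrier G \<Longrightarrow> s \<notin> B \<Longrightarrow> x [^] Suc n \<otimes> s \<in> A"
proof (induction n arbitrary: s)
  case 0
  then show ?case using step x by simp
next
  case (Suc n)
  then have "x [^] Suc n \<otimes> (x \<otimes> s) \<in> A" using step disj x by blast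
  then show ?case using x Suc.prems by (simp add: m_assoc)
qed

lemma (in group) int_pow_mult_in_table:
  assumes x: "x \<in> carrier G" and disj: "A \<inter> B = {}"
    and step: "\<And>s. s \<in> carrier G \<Longrightarrow> s \<notin> B \<Longrightarrow> x \<otimes> s \<in> A"
    and inv_step: "\<And>s. s \<in> carrier G \<Longrightarrow> s \<notin> A \<Longrightarrow> inv x \<otimes> s \<in> B"
    and i: "i \<noteq> (0::int)" and s: "s \<in> carrier G" "s \<notin> A \<union> B"
  shows "x [^] i \<otimes> s \<in> A \<union> B"
proof (cases "i > 0")
  case True
  define n where "n = nat i - 1"
  have "i = int (Suc n)" using True unfolding n_def by simp
  then have "x [^] i = x [^] Suc n" by (simp only: int_pow_int)
  then show ?thesis using pow_mult_in_attracting_set[OF x disj step] s by simp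
next
  case False
  define n where "n = nat (- i) - 1"
  have n: "i = - int (Suc n)" using False i unfolding n_def by simp
  have "x [^] i = inv (x [^] Suc n)" unfolding n by (rule int_pow_neg_int[OF x])
  also have "\<dots> = inv x [^] Suc n" by (rule nat_pow_inv[OF x, symmetric])
  finally have "x [^] i = inv x [^] Suc n" .
  moreover have "B \<inter> A = {}" using disj by blast
  then have "inv x [^] Suc n \<otimes> s \<in> B"
    using pow_mult_in_attracting_set[OF inv_closed[OF x] _ inv_step] s by simp
  ultimately show ?thesis by simp
qed

context free_prod
begin

definition prefix_set :: "'a \<Rightarrow> 'a \<Rightarrow> 'a set" where
  "prefix_set c d = {x \<in> carrier N. \<exists>t. normal_form x = c # d # t}"

definition ping_elem :: "'a \<Rightarrow> 'a \<Rightarrow> 'a" where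
  "ping_elem a b = a \<otimes> (b \<otimes> (a \<otimes> inv b))"

definition ping_set :: "'a \<Rightarrow> 'a \<Rightarrow> 'a set" where
  "ping_set a b = prefix_set a b \<union> prefix_set b (inv a)"

lemma one_notin_ping_set: "\<one> \<notin> ping_set a b"
  unfolding ping_set_def prefix_set_def by simp

lemma ping_elem_closed: "a \<in> G \<Longrightarrow> b \<in> H \<Longrightarrow> ping_elem a b \<in> carrier N"
  unfolding ping_elem_def using G_carrier H_carrier by (simp add: subsetD)

lemma ping_set_int_pow_mult:
  assumes a: "a \<in> G" "a \<noteq> \<one>" and b: "b \<in> H" "b \<noteq> \<one>"
    and "i \<noteq> 0" "s \<in> carrier N" "s \<notin> ping_set a b"
  shows "ping_elem a b [^] (i::int) \<otimes> s \<in> ping_set a b"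
  unfolding ping_set_def
proof (rule int_pow_mult_in_table[OF ping_elem_closed[OF a(1) b(1)]])
  have ac: "a \<in> carrier N" and bc: "b \<in> carrier N" using a b G_carrier H_carrier by auto
  have aL: "a \<in> letters" and bL: "b \<in> letters" using a b letters_iff by auto
  have "a \<in> G" "b \<notin> G" using a b G_inter_H by auto
  then have ab: "\<not> same_factor a b" "\<not> same_factor b (inv a)" "same_factor b (inv b)"
    "same_factor (inv a) (inv a)"
    using same_factor_iff aL bL inv_letter inv_in_G_iff ac bc by auto
  show "prefix_set a b \<inter> prefix_set b (inv a) = {}"
    using \<open>a \<in> G\<close> \<open>b \<notin> G\<close> unfolding prefix_set_def by auto
  show "ping_elem a b \<otimes> s \<in> prefix_set a b" if "s \<in> carrier N" "s \<notin> prefix_set b (inv a)" for s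
    using that normal_form_ping[OF aL bL aL inv_letter[OF bL] ab(1) same_factor_refl[OF aL] ab(3)]
      ac bc unfolding prefix_set_def ping_elem_def by (auto simp: m_assoc)
  show "inv (ping_elem a b) \<otimes> s \<in> prefix_set b (inv a)" if "s \<in> carrier N" "s \<notin> prefix_set a b" for s
  proof -
    have "inv (ping_elem a b) \<otimes> s = b \<otimes> (inv a \<otimes> (inv b \<otimes> (inv a \<otimes> s)))"
      using ac bc that by (simp add: ping_elem_def inv_mult_group m_assoc)
    then show ?thesis
      using that normal_form_ping[OF bL inv_letter[OF aL] inv_letter[OF bL] inv_letter[OF aL] ab(2)
          ab(3) ab(4)] ac bc
      unfolding prefix_set_def by auto
  qed
qed (use assms in \<open>auto simp: ping_set_def\<close>)

end

lemma alternating_word_Cons: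
  "alternating_word M A B (z # w) \<longleftrightarrow> z \<in> (A \<union> B) - {\<one>\<^bsub>M\<^esub>} \<and>
     (w = [] \<or> alternating_word M A B w \<and> \<not> (z \<in> A \<and> hd w \<in> A) \<and> \<not> (z \<in> B \<and> hd w \<in> B))"
proof -
  have "alternating_word M A B v \<longleftrightarrow> v \<noteq> [] \<and> set v \<subseteq> (A \<union> B) - {\<one>\<^bsub>M\<^esub>} \<and>
      successively (\<lambda>c d. \<not> (c \<in> A \<and> d \<in> A) \<and> \<not> (c \<in> B \<and> d \<in> B)) v" for v
    unfolding alternating_word_def successively_conv_nth by blast
  then show ?thesis by (cases w) (auto simp: successively_Cons)
qed

lemma alternating_word_hd: "alternating_word M A B w \<Longrightarrow> hd w \<in> A \<union> B"
  unfolding alternating_word_def using hd_in_set by blast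

context group
begin

lemma nontrivial_power_mult_in:
  assumes x: "x \<in> carrier G"
    and ping: "\<And>i s. i \<noteq> (0::int) \<Longrightarrow> s \<in> carrier G \<Longrightarrow> s \<notin> A \<Longrightarrow> x [^] i \<otimes> s \<in> A"
    and z: "z \<in> generate G {x}" "z \<noteq> \<one>" and s: "s \<in> carrier G" "s \<notin> A"
  shows "z \<otimes> s \<in> A"
proof -
  obtain i where i: "z = x [^] (i::int)" using z(1) generate_pow[OF x] by auto
  then have "i \<noteq> 0" using z(2) by auto
  then show ?thesis using ping[OF _ s] i by simp
qed

lemma ping_pong_word_prod:
  assumes x: "x \<in> carrier G" and y: "y \<in> carrier G" and disj: "A \<inter> B = {}"
    and one: "\<one> \<notin> A" "\<one> \<notin> B"
    and ping: "\<And>i s. i \<noteq> (0::int) \<Longrightarrow> s \<in> carrier G \<Longrightarrow> s \<notin> A \<Longrightarrow> x [^] i \<otimes> s \<in> A"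
    and pong: "\<And>i s. i \<noteq> (0::int) \<Longrightarrow> s \<in> carrier G \<Longrightarrow> s \<notin> B \<Longrightarrow> y [^] i \<otimes> s \<in> B"
  shows "alternating_word G (generate G {x}) (generate G {y}) w \<Longrightarrow>
    (hd w \<in> generate G {x} \<longrightarrow> foldr (\<otimes>) w \<one> \<in> A) \<and> (hd w \<in> generate G {y} \<longrightarrow> foldr (\<otimes>) w \<one> \<in> B)"
proof (induction w)
  case Nil
  then show ?case by (simp add: alternating_word_def)
next
  case (Cons z w)
  have z: "z \<in> generate G {x} \<union> generate G {y}" "z \<noteq> \<one>"
    using Cons.prems by (auto simp: alternating_word_Cons)
  have "set (z # w) \<subseteq> generate G {x} \<union> generate G {y}"
    using Cons.prems unfolding alternating_word_def by blast
  moreover have "generate G {x} \<subseteq> carrier G" "generate G {y} \<subseteq> carrier G"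
    using generate_incl x y by auto
  ultimately have wc: "foldr (\<otimes>) w \<one> \<in> carrier G"
    by (intro foldr_mult_closed) auto
  have wx: "foldr (\<otimes>) w \<one> \<notin> A" if zx: "z \<in> generate G {x}"
  proof (cases "w = []")
    case False
    then have "alternating_word G (generate G {x}) (generate G {y}) w" "hd w \<notin> generate G {x}"
      using Cons.prems zx by (auto simp: alternating_word_Cons)
    then have "hd w \<in> generate G {y}" using alternating_word_hd by blast
    then show ?thesis using Cons.IH \<open>alternating_word _ _ _ w\<close> disj by blast
  qed (use one in simp)
  have wy: "foldr (\<otimes>) w \<one> \<notin> B" if zy: "z \<in> generate G {y}"
  proof (cases "w = []")
    case False
    then have "alternating_word G (generate G {x}) (generate G {y}) w" "hd w \<notin> generate G {y}"
      using Cons.prems zy by (auto simp: alternating_word_Cons)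
    then have "hd w \<in> generate G {x}" using alternating_word_hd by blast
    then show ?thesis using Cons.IH \<open>alternating_word _ _ _ w\<close> disj by blast
  qed (use one in simp)
  have "z \<otimes> foldr (\<otimes>) w \<one> \<in> A" if "z \<in> generate G {x}"
    using nontrivial_power_mult_in[OF x ping that z(2) wc wx[OF that]] .
  moreover have "z \<otimes> foldr (\<otimes>) w \<one> \<in> B" if "z \<in> generate G {y}"
    using nontrivial_power_mult_in[OF y pong that z(2) wc wy[OF that]] .
  ultimately show ?case by simp
qed

lemma generate_union_cyclic:
  assumes "x \<in> carrier G" "y \<in> carrier G"
  shows "generate G (generate G {x} \<union> generate G {y}) = generate G {x, y}"
proof
  have "{x, y} \<subseteq> generate G {x} \<union> generate G {y}"
    using generate.incl[of x "{x}" G] generate.incl[of y "{y}" G] by auto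
  then show "generate G {x, y} \<subseteq> generate G (generate G {x} \<union> generate G {y})" by (rule mono_generate)
  have "generate G {x} \<subseteq> generate G {x, y}" "generate G {y} \<subseteq> generate G {x, y}"
    using mono_generate[of "{x}" "{x, y}"] mono_generate[of "{y}" "{x, y}"] by auto
  then show "generate G (generate G {x} \<union> generate G {y}) \<subseteq> generate G {x, y}"
    using generate_subgroup_incl[OF _ generate_is_subgroup] assms by simp
qed

lemma ping_pong_free_product:
  assumes x: "x \<in> carrier G" and y: "y \<in> carrier G" and disj: "A \<inter> B = {}"
    and one: "\<one> \<notin> A" "\<one> \<notin> B"
    and ping: "\<And>i s. i \<noteq> (0::int) \<Longrightarrow> s \<in> carrier G \<Longrightarrow> s \<notin> A \<Longrightarrow> x [^] i \<otimes> s \<in> A"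
    and pong: "\<And>i s. i \<noteq> (0::int) \<Longrightarrow> s \<in> carrier G \<Longrightarrow> s \<notin> B \<Longrightarrow> y [^] i \<otimes> s \<in> B"
  shows "free_product (G\<lparr>carrier := generate G {x, y}\<rparr>) (generate G {x}) (generate G {y})"
proof -
  let ?C = "generate G {x, y}"
  have sub: "subgroup (generate G {x}) G" "subgroup (generate G {y}) G" "subgroup ?C G"
    using generate_is_subgroup x y by auto
  have incl: "generate G {x} \<subseteq> ?C" "generate G {y} \<subseteq> ?C"
    using mono_generate[of "{x}" "{x, y}"] mono_generate[of "{y}" "{x, y}"] by auto
  have in_A: "g \<in> A" if g: "g \<in> generate G {x}" "g \<noteq> \<one>" for g
  proof -
    have "g \<otimes> \<one> \<in> A" by (rule nontrivial_power_mult_in[OF x ping g one_closed one(1)])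
    then show ?thesis using generate_in_carrier[of "{x}"] x g(1) by simp
  qed
  have in_B: "g \<in> B" if g: "g \<in> generate G {y}" "g \<noteq> \<one>" for g
  proof -
    have "g \<otimes> \<one> \<in> B" by (rule nontrivial_power_mult_in[OF y pong g one_closed one(2)])
    then show ?thesis using generate_in_carrier[of "{y}"] y g(1) by simp
  qed
  have "generate G {x} \<inter> generate G {y} = {\<one>}"
    using in_A in_B disj sub subgroup.one_closed by blast
  moreover have "generate (G\<lparr>carrier := ?C\<rparr>) (generate G {x} \<union> generate G {y}) = ?C"
    using generate_consistent[OF _ sub(3)] incl generate_union_cyclic[OF x y] by simp
  moreover have "foldr (\<otimes>) w \<one> \<noteq> \<one>" if w: "alternating_word G (generate G {x}) (generate G {y}) w" for w
  proof -
    have "(hd w \<in> generate G {x} \<longrightarrow> foldr (\<otimes>) w \<one> \<in> A) \<and> (hd w \<in> generate G {y} \<longrightarrow> foldr (\<otimes>) w \<one> \<in> B)"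
      using ping pong w by (rule ping_pong_word_prod[OF x y disj one])
    then show ?thesis using alternating_word_hd[OF w] one by auto
  qed
  ultimately show ?thesis
    unfolding free_product_def alternating_word_def
    using subgroup_incl[OF sub(1,3) incl(1)] subgroup_incl[OF sub(2,3) incl(2)]
    by (simp add: alternating_word_def)
qed

lemma hom_from_infinite_cyclic:
  assumes x: "x \<in> carrier G" and inf: "\<And>i::int. x [^] i = \<one> \<Longrightarrow> i = 0"
    and T: "group T" and \<sigma>: "\<sigma> \<in> carrier T"
  shows "\<exists>\<phi> \<in> hom (G\<lparr>carrier := generate G {x}\<rparr>) T. \<phi> x = \<sigma>"
proof -
  interpret T: group T by (rule T)
  have uniq: "i = j" if "x [^] (i::int) = x [^] j" for i j
    using inf[of "i - j"] that x by (simp add: int_pow_diff)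
  define \<phi> where "\<phi> g = \<sigma> [^]\<^bsub>T\<^esub> (THE i::int. g = x [^] i)" for g
  have \<phi>_pow: "\<phi> (x [^] i) = \<sigma> [^]\<^bsub>T\<^esub> i" for i :: int
    unfolding \<phi>_def using uniq by (metis (mono_tags) the_equality)
  have "\<phi> \<in> hom (G\<lparr>carrier := generate G {x}\<rparr>) T"
    using \<phi>_pow \<sigma> generate_pow[OF x]
    by (intro homI) (auto simp: int_pow_mult[OF x, symmetric] T.int_pow_mult)
  moreover have "\<phi> x = \<sigma>" using \<phi>_pow[of 1] x \<sigma> by simp
  ultimately show ?thesis by blast
qed

lemma derived_pow_consistent:
  "subgroup C G \<Longrightarrow> (derived (G\<lparr>carrier := C\<rparr>) ^^ n) C = (derived G ^^ n) C"
proof (induction n)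
  case (Suc n)
  have "(derived G ^^ n) C \<subseteq> C"
    using Suc.prems derived_incl exp_of_derived_is_subgroup mono_exp_of_derived subgroup.subset
    by (induction n) (auto intro: derived_incl)
  then show ?case using Suc derived_consistent by simp
qed simp

lemma not_solvable_if_perfect_image:
  assumes C: "subgroup C G" and T: "group T" and f: "f \<in> hom (G\<lparr>carrier := C\<rparr>) T"
    and perfect: "derived T (f ` C) = f ` C" and nontriv: "f ` C \<noteq> {\<one>\<^bsub>T\<^esub>}"
  shows "\<not> solvable G"
proof
  assume "solvable G"
  then obtain n where n: "(derived G ^^ n) (carrier G) = {\<one>}"
    using solvable_iff_trivial_derived_seq by blast
  interpret f: group_hom "G\<lparr>carrier := C\<rparr>" T f
    using f T subgroup_imp_group[OF C] by (simp add: group_hom_def group_hom_axioms_def)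
  have "(derived T ^^ n) (f ` C) = f ` C" using perfect by (induction n) simp_all
  moreover have "(derived T ^^ n) (f ` C) = f ` (derived G ^^ n) C"
    using f.exp_of_derived_img[of C n] derived_pow_consistent[OF C] by simp
  moreover have "(derived G ^^ n) C \<subseteq> {\<one>}"
    using mono_exp_of_derived[of C "carrier G" n] n subgroup.subset[OF C] by blast
  ultimately have "f ` C \<subseteq> f ` {\<one>}" by (metis image_mono)
  then have "f ` C \<subseteq> {\<one>\<^bsub>T\<^esub>}" using f.hom_one by simp
  moreover have "f \<one> = \<one>\<^bsub>T\<^esub>" using f.hom_one by simp
  then have "\<one>\<^bsub>T\<^esub> \<in> f ` C" using image_eqI subgroup.one_closed[OF C] by metis
  ultimately show False using nontriv by blast
qed

lemma generate_perfect_if_commutators: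
  assumes "S \<subseteq> carrier G" "S \<subseteq> derived_set G (generate G S)"
  shows "derived G (generate G S) = generate G S"
proof
  show "derived G (generate G S) \<subseteq> generate G S"
    using derived_incl[OF subset_refl generate_is_subgroup[OF assms(1)]] .
  have "S \<subseteq> derived G (generate G S)"
    using assms(2) unfolding derived_def by (auto intro: generate.incl)
  then show "generate G S \<subseteq> derived G (generate G S)"
    using generate_subgroup_incl derived_is_subgroup generate_incl[OF assms(1)] by blast
qed

end

definition cyc12345 :: "nat \<Rightarrow> nat" where
  "cyc12345 = transpose 1 2 \<circ> transpose 2 3 \<circ> transpose 3 4 \<circ> transpose 4 5"
definition cyc12345_inv :: "nat \<Rightarrow> nat" where
  "cyc12345_inv = transpose 4 5 \<circ> transpose 3 4 \<circ> transpose 2 3 \<circ> transpose 1 2"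
definition cyc13542 :: "nat \<Rightarrow> nat" where
  "cyc13542 = transpose 1 3 \<circ> transpose 3 5 \<circ> transpose 5 4 \<circ> transpose 4 2"
definition cyc13542_inv :: "nat \<Rightarrow> nat" where
  "cyc13542_inv = transpose 4 2 \<circ> transpose 5 4 \<circ> transpose 3 5 \<circ> transpose 1 3"

lemmas five_cycle_defs = cyc12345_def cyc12345_inv_def cyc13542_def cyc13542_inv_def

lemma fun_eq_on_1_to_5:
  assumes "f 1 = g 1" "f 2 = g 2" "f 3 = g 3" "f 4 = g 4" "f 5 = g (5::nat)"
    "\<And>i. i \<noteq> 1 \<Longrightarrow> i \<noteq> 2 \<Longrightarrow> i \<noteq> 3 \<Longrightarrow> i \<noteq> 4 \<Longrightarrow> i \<noteq> 5 \<Longrightarrow> f i = g i"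
  shows "f = g"
proof
  fix i show "f i = g i" using assms by (cases "i \<in> {1, 2, 3, 4, 5}") auto
qed

lemma five_cycles_carrier:
  "cyc12345 \<in> carrier (sym_group 5)" "cyc12345_inv \<in> carrier (sym_group 5)"
  "cyc13542 \<in> carrier (sym_group 5)" "cyc13542_inv \<in> carrier (sym_group 5)"
  unfolding sym_group_carrier five_cycle_defs by (intro permutes_compose permutes_swap_id; simp)+

lemma five_cycle_identities:
  "cyc12345 \<circ> cyc12345_inv = id" "cyc12345_inv \<circ> cyc12345 = id"
  "cyc13542 \<circ> cyc13542_inv = id" "cyc13542_inv \<circ> cyc13542 = id"
  "cyc13542 \<circ> (cyc13542 \<circ> cyc12345_inv) \<circ> cyc13542_inv \<circ> (cyc12345 \<circ> cyc13542_inv) = cyc12345"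
  "cyc12345 \<circ> (cyc12345 \<circ> cyc13542_inv) \<circ> cyc12345_inv \<circ> (cyc13542 \<circ> cyc12345_inv) = cyc13542"
  by (rule fun_eq_on_1_to_5; simp add: five_cycle_defs transpose_def)+

lemma perfect_five_cycle_subgroup:
  "derived (sym_group 5) (generate (sym_group 5) {cyc12345, cyc13542}) =
    generate (sym_group 5) {cyc12345, cyc13542}"
proof -
  interpret S5: group "sym_group 5" by (rule sym_group_is_group)
  let ?Y = "generate (sym_group 5) {cyc12345, cyc13542}"
  have sub: "{cyc12345, cyc13542} \<subseteq> carrier (sym_group 5)" using five_cycles_carrier by auto
  have inv: "inv\<^bsub>sym_group 5\<^esub> cyc12345 = cyc12345_inv" "inv\<^bsub>sym_group 5\<^esub> cyc13542 = cyc13542_inv"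
    "inv\<^bsub>sym_group 5\<^esub> cyc12345_inv = cyc12345" "inv\<^bsub>sym_group 5\<^esub> cyc13542_inv = cyc13542"
    using five_cycles_carrier five_cycle_identities
    by (auto intro!: S5.inv_equality simp: sym_group_mult sym_group_one simp del: sym_group_inv_equality)
  have Y: "cyc12345 \<in> ?Y" "cyc13542 \<in> ?Y" by (auto intro: generate.incl)
  then have Y_inv: "cyc12345_inv \<in> ?Y" "cyc13542_inv \<in> ?Y"
    using S5.generate_m_inv_closed[OF sub] inv by metis+
  have comm: "h \<otimes>\<^bsub>sym_group 5\<^esub> h' \<otimes>\<^bsub>sym_group 5\<^esub> inv\<^bsub>sym_group 5\<^esub> h
      \<otimes>\<^bsub>sym_group 5\<^esub> inv\<^bsub>sym_group 5\<^esub> h' \<in> derived_set (sym_group 5) ?Y"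
    if "h \<in> ?Y" "h' \<in> ?Y" for h h'
    using that by blast
  have "inv\<^bsub>sym_group 5\<^esub> (cyc13542 \<circ> cyc12345_inv) = cyc12345 \<circ> cyc13542_inv"
    "inv\<^bsub>sym_group 5\<^esub> (cyc12345 \<circ> cyc13542_inv) = cyc13542 \<circ> cyc12345_inv"
    using S5.inv_mult_group five_cycles_carrier inv
    by (simp_all add: sym_group_mult del: sym_group_inv_equality)
  moreover have "cyc13542 \<circ> cyc12345_inv \<in> ?Y" "cyc12345 \<circ> cyc13542_inv \<in> ?Y"
    using Y Y_inv S5.subgroupE(4)[OF S5.generate_is_subgroup[OF sub]] by (simp_all add: sym_group_mult)
  ultimately have "cyc12345 \<in> derived_set (sym_group 5) ?Y" "cyc13542 \<in> derived_set (sym_group 5) ?Y"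
    using comm[of cyc13542 "cyc13542 \<circ> cyc12345_inv"] comm[of cyc12345 "cyc12345 \<circ> cyc13542_inv"] Y inv
      five_cycle_identities(5,6)
    by (simp_all add: sym_group_mult comp_assoc del: sym_group_inv_equality)
  then show ?thesis using S5.generate_perfect_if_commutators[OF sub] by blast
qed

lemma cyc12345_neq_id: "cyc12345 \<noteq> id"
proof
  assume "cyc12345 = id"
  then have "cyc12345 1 = 1" by simp
  then show False by (simp add: cyc12345_def transpose_def)
qed

text \<open>A ping-pong pair generates a free group of rank two, which maps onto the perfect subgroup
  of the symmetric group generated by two 5-cycles.\<close>
lemma (in group) not_solvable_if_ping_pong:
  assumes x: "x \<in> carrier G" and y: "y \<in> carrier G" and disj: "A \<inter> B = {}"
    and one: "\<one> \<notin> A" "\<one> \<notin> B"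
    and ping: "\<And>i s. i \<noteq> (0::int) \<Longrightarrow> s \<in> carrier G \<Longrightarrow> s \<notin> A \<Longrightarrow> x [^] i \<otimes> s \<in> A"
    and pong: "\<And>i s. i \<noteq> (0::int) \<Longrightarrow> s \<in> carrier G \<Longrightarrow> s \<notin> B \<Longrightarrow> y [^] i \<otimes> s \<in> B"
  shows "\<not> solvable G"
proof -
  let ?C = "generate G {x, y}"
  let ?S5 = "sym_group 5"
  have C: "subgroup ?C G" using generate_is_subgroup x y by auto
  interpret F: free_prod "G\<lparr>carrier := ?C\<rparr>" "generate G {x}" "generate G {y}"
    using subgroup_imp_group[OF C] ping_pong_free_product[OF x y disj one ping pong]
    by (simp add: free_prod_def free_prod_axioms_def)
  have "x [^] i = \<one> \<Longrightarrow> i = 0" "y [^] i = \<one> \<Longrightarrow> i = 0" for i :: int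
    using ping[of i \<one>] pong[of i \<one>] one x y by (auto simp del: r_one)
  then obtain \<phi> \<psi> where
    \<phi>: "\<phi> \<in> hom (G\<lparr>carrier := generate G {x}\<rparr>) ?S5" "\<phi> x = cyc12345" and
    \<psi>: "\<psi> \<in> hom (G\<lparr>carrier := generate G {y}\<rparr>) ?S5" "\<psi> y = cyc13542"
    using hom_from_infinite_cyclic[OF x _ sym_group_is_group] hom_from_infinite_cyclic[OF y _ sym_group_is_group]
      five_cycles_carrier by metis
  have "\<exists>\<Psi> \<in> hom (G\<lparr>carrier := ?C\<rparr>) ?S5.
      (\<forall>g\<in>generate G {x}. \<Psi> g = \<phi> g) \<and> (\<forall>h\<in>generate G {y}. \<Psi> h = \<psi> h)"
    using F.exists_hom_extension[OF sym_group_is_group[of 5], of \<phi> \<psi>] \<phi>(1) \<psi>(1) by simp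
  then obtain \<Psi> where \<Psi>: "\<Psi> \<in> hom (G\<lparr>carrier := ?C\<rparr>) ?S5"
    "\<forall>g\<in>generate G {x}. \<Psi> g = \<phi> g" "\<forall>h\<in>generate G {y}. \<Psi> h = \<psi> h"
    by blast
  interpret \<Psi>: group_hom "G\<lparr>carrier := ?C\<rparr>" ?S5 \<Psi>
    using \<Psi>(1) subgroup_imp_group[OF C] sym_group_is_group by (simp add: group_hom_def group_hom_axioms_def)
  have "x \<in> generate G {x}" "y \<in> generate G {y}" "{x, y} \<subseteq> ?C" by (auto intro: generate.incl)
  then have xy: "{x, y} \<subseteq> ?C" "\<Psi> x = cyc12345" "\<Psi> y = cyc13542"
    using \<Psi> \<phi>(2) \<psi>(2) by auto
  have "\<Psi> ` ?C = generate ?S5 {cyc12345, cyc13542}"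
    using \<Psi>.generate_img[of "{x, y}"] generate_consistent[OF xy(1) C] xy by simp
  moreover have "generate ?S5 {cyc12345, cyc13542} \<noteq> {\<one>\<^bsub>?S5\<^esub>}"
    using generate.incl[of cyc12345 "{cyc12345, cyc13542}" ?S5] cyc12345_neq_id by (auto simp: sym_group_one)
  ultimately show ?thesis
    using not_solvable_if_perfect_image[OF C sym_group_is_group \<Psi>(1)] perfect_five_cycle_subgroup by simp
qed

context free_prod
begin

lemma ping_sets_disjoint:
  assumes a: "a \<in> G" "a \<noteq> \<one>" and a': "a' \<in> G" "a' \<noteq> \<one>" "a \<noteq> a'" and b: "b \<in> H"
  shows "ping_set a b \<inter> ping_set a' b = {}"
proof -
  have "a \<noteq> b" "a' \<noteq> b" using a a' b G_inter_H by auto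
  moreover have "inv a \<noteq> inv a'"
  proof
    assume "inv a = inv a'"
    then have "inv (inv a) = inv (inv a')" by simp
    then show False using a a' G_carrier by (simp add: subsetD)
  qed
  ultimately show ?thesis using a'(3) unfolding ping_set_def prefix_set_def by auto
qed

lemma not_solvable_if_three_elements:
  assumes a: "a \<in> G" "a \<noteq> \<one>" and a': "a' \<in> G" "a' \<noteq> \<one>" "a \<noteq> a'" and b: "b \<in> H" "b \<noteq> \<one>"
  shows "\<not> solvable N"
  using not_solvable_if_ping_pong[OF ping_elem_closed[OF a(1) b(1)] ping_elem_closed[OF a'(1) b(1)]
      ping_sets_disjoint[OF a a' b(1)] one_notin_ping_set one_notin_ping_set
      ping_set_int_pow_mult[OF a b] ping_set_int_pow_mult[OF a'(1,2) b]] .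

end

section \<open>The infinite dihedral group\<close>

lemma carrier_Dinf [simp]: "carrier Dinf = UNIV"
  and one_Dinf [simp]: "\<one>\<^bsub>Dinf\<^esub> = (0, False)"
  and mult_Dinf [simp]: "x \<otimes>\<^bsub>Dinf\<^esub> y = (fst x + (if snd x then - fst y else fst y), snd x \<noteq> snd y)"
  unfolding Dinf_def by simp_all

lemma group_Dinf: "group Dinf"
proof (rule groupI)
  fix x y z :: "int \<times> bool"
  show "x \<otimes>\<^bsub>Dinf\<^esub> y \<otimes>\<^bsub>Dinf\<^esub> z = x \<otimes>\<^bsub>Dinf\<^esub> (y \<otimes>\<^bsub>Dinf\<^esub> z)" by auto
  show "\<exists>y\<in>carrier Dinf. y \<otimes>\<^bsub>Dinf\<^esub> x = \<one>\<^bsub>Dinf\<^esub>"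
    by (rule bexI[of _ "(if snd x then fst x else - fst x, snd x)"]) auto
qed auto

locale free_prod_order_two = free_prod +
  fixes a b
  assumes G_eq: "G = {\<one>, a}" and a_neq_one: "a \<noteq> \<one>"
    and H_eq: "H = {\<one>, b}" and b_neq_one: "b \<noteq> \<one>"
begin

lemma a_carrier: "a \<in> carrier N" and b_carrier: "b \<in> carrier N"
  using G_eq H_eq G_carrier H_carrier by auto

lemma factor_of_order_two:
  assumes "A = {\<one>, c}" "c \<noteq> \<one>" "subgroup A N" shows "c \<otimes> c = \<one>"
proof -
  have "inv c \<in> A" "c \<in> carrier N" using assms subgroup.m_inv_closed subgroup.subset by fastforce+
  then have "inv c = c" using assms by auto
  then show ?thesis using \<open>c \<in> carrier N\<close> r_inv by metis
qed

lemma a_a: "a \<otimes> a = \<one>" and b_b: "b \<otimes> b = \<one>"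
  using factor_of_order_two G_eq H_eq a_neq_one b_neq_one subgroup_G subgroup_H by auto

lemma letters_eq: "letters = {a, b}" and a_neq_b: "a \<noteq> b"
  using G_eq H_eq G_inter_H a_neq_one b_neq_one unfolding letters_def by auto

lemma letter_hom_G: "(\<lambda>g. if g = \<one> then (0, False) else (0, True)) \<in> hom (N\<lparr>carrier := G\<rparr>) Dinf"
  using G_eq a_a a_carrier a_neq_one by (intro homI) auto

lemma letter_hom_H: "(\<lambda>h. if h = \<one> then (0, False) else (1, True)) \<in> hom (N\<lparr>carrier := H\<rparr>) Dinf"
  using H_eq b_b b_carrier b_neq_one by (intro homI) auto

sublocale free_prod_extension N G H Dinf
  "\<lambda>g. if g = \<one> then (0, False) else (0, True)" "\<lambda>h. if h = \<one> then (0, False) else (1, True)"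
  using free_prod_axioms group_Dinf letter_hom_G letter_hom_H
  unfolding free_prod_extension_def free_prod_extension_axioms_def by blast

lemma extension_a: "extension a = (0, True)" and extension_b: "extension b = (1, True)"
  using extension_letter letter_image_G letter_image_H G_eq H_eq a_neq_one b_neq_one by auto

lemma extension_reduced_word:
  "reduced w \<Longrightarrow> w \<noteq> [] \<Longrightarrow> extension (word_prod w) =
    (if hd w = a then - int (length w div 2) else int ((length w + 1) div 2), odd (length w))"
proof (induction w)
  case (Cons c w)
  have c: "c = a \<or> c = b" and w: "reduced w" and wc: "set w \<subseteq> carrier N"
    using Cons.prems letters_eq reduced_carrier by (auto simp: reduced_Cons)
  have "extension (word_prod (c # w)) = extension c \<otimes>\<^bsub>Dinf\<^esub> extension (word_prod w)"
    using extension_hom c a_carrier b_carrier foldr_mult_closed[OF wc] by (auto simp: hom_mult)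
  moreover have "hd w = (if c = a then b else a)" if "w \<noteq> []"
    using Cons.prems that c hd_letter[OF w] letters_eq a_neq_b same_factor_refl
    by (auto simp: reduced_Cons)
  ultimately show ?case
    using Cons.IH[OF w] c extension_a extension_b a_neq_b
    by (cases "w = []") (auto elim!: evenE oddE)
qed simp

lemma extension_inj:
  assumes x: "x \<in> carrier N" and ext: "extension x = \<one>\<^bsub>Dinf\<^esub>" shows "x = \<one>"
proof (rule ccontr)
  assume "x \<noteq> \<one>"
  then have "normal_form x \<noteq> []" using word_prod_normal_form[OF x] by auto
  then have "extension x = (if hd (normal_form x) = a then - int (length (normal_form x) div 2)
      else int ((length (normal_form x) + 1) div 2), odd (length (normal_form x)))"
    using extension_reduced_word[OF reduced_normal_form[OF x]] word_prod_normal_form[OF x] by simp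
  then show False using ext \<open>normal_form x \<noteq> []\<close> by (auto elim!: evenE oddE split: if_splits)
qed

lemma extension_translations:
  "\<exists>x\<in>carrier N. extension x = (int k, False) \<and> (\<exists>y\<in>carrier N. extension y = (- int k, False))"
proof (induction k)
  case 0
  then show ?case by (auto intro: bexI[of _ \<one>])
next
  case (Suc k)
  then obtain x y where "x \<in> carrier N" "extension x = (int k, False)"
    "y \<in> carrier N" "extension y = (- int k, False)" by blast
  then show ?case
    using extension_hom a_carrier b_carrier extension_a extension_b
    by (intro bexI[of _ "b \<otimes> a \<otimes> x"] conjI bexI[of _ "a \<otimes> b \<otimes> y"]) (auto simp: hom_mult)
qed

lemma extension_surj: "extension ` carrier N = carrier Dinf"
proof -
  have even: "(n, False) \<in> extension ` carrier N" for n :: int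
  proof (cases "n \<ge> 0")
    case True
    from extension_translations[of "nat n"] obtain x where x: "x \<in> carrier N" "extension x = (int (nat n), False)"
      by blast
    then have "(n, False) = extension x" using True by simp
    then show ?thesis by (rule rev_image_eqI[OF x(1)])
  next
    case False
    from extension_translations[of "nat (- n)"] obtain x where x: "x \<in> carrier N" "extension x = (- int (nat (- n)), False)"
      by blast
    then have "(n, False) = extension x" using False by simp
    then show ?thesis by (rule rev_image_eqI[OF x(1)])
  qed
  have odd: "(n, True) \<in> extension ` carrier N" for n :: int
  proof -
    obtain x where x: "(n, False) = extension x" "x \<in> carrier N" using even[of n] by (rule imageE)
    then have "(n, True) = extension (x \<otimes> a)"
      using extension_hom a_carrier extension_a by (simp add: hom_mult x(1)[symmetric])
    then show ?thesis by (rule rev_image_eqI[OF m_closed[OF x(2) a_carrier]])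
  qed
  show ?thesis
  proof (intro equalityI subsetI)
    fix p :: "int \<times> bool"
    show "p \<in> extension ` carrier N" using even odd by (cases p; cases "snd p") auto
  qed simp
qed

lemma iso_Dinf: "N \<cong> Dinf"
proof -
  interpret group_hom N Dinf extension
    using extension_hom group_Dinf by (simp add: group_hom_def group_hom_axioms_def is_group)
  have "extension \<in> iso N Dinf"
    using iso_iff extension_surj extension_inj by auto
  then show ?thesis by (rule is_isoI)
qed

end

context free_prod
begin

text \<open>A factor with three elements would give a ping-pong pair, so both factors have order two.\<close>
lemma solvable_imp_iso_Dinf:
  assumes solv: "solvable N" and "G \<noteq> {\<one>}" "H \<noteq> {\<one>}"
  shows "N \<cong> Dinf"
proof -
  have "\<exists>a\<in>G. a \<noteq> \<one>" "\<exists>b\<in>H. b \<noteq> \<one>"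
    using assms(2,3) subgroup.one_closed[OF subgroup_G] subgroup.one_closed[OF subgroup_H] by blast+
  then obtain a b where a: "a \<in> G" "a \<noteq> \<one>" and b: "b \<in> H" "b \<noteq> \<one>" by blast
  interpret HG: free_prod N H G by (rule free_prod_swap)
  have "G = {\<one>, a}"
  proof (intro equalityI subsetI)
    fix a' assume "a' \<in> G"
    then show "a' \<in> {\<one>, a}" using not_solvable_if_three_elements[OF a _ _ _ b, of a'] solv by auto
  qed (use a subgroup.one_closed[OF subgroup_G] in auto)
  moreover have "H = {\<one>, b}"
  proof (intro equalityI subsetI)
    fix b' assume "b' \<in> H"
    then show "b' \<in> {\<one>, b}" using HG.not_solvable_if_three_elements[OF b _ _ _ a, of b'] solv by auto
  qed (use b subgroup.one_closed[OF subgroup_H] in auto)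
  ultimately interpret free_prod_order_two N G H a b
    using a b by unfold_locales
  show ?thesis by (rule iso_Dinf)
qed

end

theorem lemma6p1:
  fixes N :: "('a, 'b) monoid_scheme" and K G H :: "'a set"
  assumes "group N"
    and "K \<lhd> N"
    and "perfect_subgroup N K"
    and "solvable (N Mod K)"
    and "free_product N G H"
  shows "perfect_subgroup N G \<or> perfect_subgroup N H \<or> N Mod K \<cong> Dinf"
proof -
  interpret free_prod N G H
    using assms(1,5) by (simp add: free_prod_def free_prod_axioms_def)
  interpret perfect_quotient N G H K
    using assms(2,3) free_prod_axioms unfolding perfect_quotient_def perfect_quotient_axioms_def perfect_subgroup_def
    by blast
  interpret Q: free_prod "N Mod K" "proj ` G" "proj ` H"
    using group_Mod quotient_free_product by (simp add: free_prod_def free_prod_axioms_def)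
  interpret HG: free_prod N H G by (rule free_prod_swap)
  have K: "K \<subseteq> carrier N" using subgroup_K subgroup.subset by blast
  show ?thesis
  proof (cases "G \<subseteq> K \<or> H \<subseteq> K")
    case True
    then show ?thesis
      using perfect_subgroup_G_if_subset_perfect[OF K perfect_K]
        HG.perfect_subgroup_G_if_subset_perfect[OF K perfect_K] by blast
  next
    case False
    then have "proj ` G \<noteq> {\<one>\<^bsub>N Mod K\<^esub>}" "proj ` H \<noteq> {\<one>\<^bsub>N Mod K\<^esub>}"
      using proj_image_trivial_iff[OF G_carrier] proj_image_trivial_iff[OF H_carrier] by blast+
    then show ?thesis using Q.solvable_imp_iso_Dinf assms(4) by simp
  qed
qed

end
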